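(* Let the data $\{Y_{ij}\}$, the true parameters $(\boldsymbol\nu^*,\mathbf B^* )$, the MLE $(\hat{\boldsymbol\nu},\hat{\mathbf B})$, the posterior weights $\hat\gamma_{ik}$, the pseudo-likelihoods $Q_j$, the candidate solutions $\tilde{\boldsymbol\beta}_j^{(m)}$, $m=1,\dots,K$, and the selected level $\tilde m_j$ be as described in the context, with $J$ and $K$ fixed and $N\to\infty$. Suppose that the following assumptions hold: (A1) (root-$N$ consistency of the MLE) $\|\hat{\boldsymbol\nu}-\boldsymbol\nu^*\|=O_p(N^{-1/2})$ and $\|\hat{\mathbf B}-\mathbf B^*\|_F=O_p(N^{-1/2})$, where $\|\cdot\|$ is the Euclidean norm and $\|\cdot\|_F$ the Frobenius norm, and the class labels of the MLE are aligned with the true labels; (A2) (interior) $0<\beta^*_{jk}<1$ and $\nu^*_k>0$ for all $j=1,\dots,J$ and $k=1,\dots,K$; (A3) the EBIC constant $\rho\ge 1$ does not depend on $N$. Then for each item $j=1,\dots,J$, $P(\tilde m_j=m_j^* )\to 1$ as $N\to\infty$, where $m_j^*$ is the number of distinct values among $\beta^*_{j1},\dots,\beta^*_{jK}$. Moreover, writing $\tilde{\boldsymbol\beta}_j^{(\tilde m_j)}=(\tilde\beta_{j1},\dots,\tilde\beta_{jK})^\top$ for the refined estimator of item $j$, as $N\to\infty$: 1. $P(\tilde\beta_{jg}=\tilde\beta_{jh})\to 1$ for all $g,h\in\{1,\dots,K\}$ with $\beta^*_{jg}=\beta^*_{jh}$; 2. $P(\tilde\beta_{jg}\neq\tilde\beta_{jh})\to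 1$ for all $g,h\in\{1,\dots,K\}$ with $\beta^*_{jg}\neq\beta^*_{jh}$.
   Context: Latent class model: $N$ respondents answer $J$ binary items, $Y_{ij}\in\{0,1\}$. Latent classes $\xi_1,\dots,\xi_N\in\{1,\dots,K\}$ are i.i.d. with $P(\xi_i=k)=\nu_k$ ($\nu_k\ge 0$, $\sum_k\nu_k=1$), $P(Y_{ij}=1\mid\xi_i=k)=\beta_{jk}$, and $Y_{i1},\dots,Y_{iJ}$ are conditionally independent given $\xi_i$ (local independence). Write $\boldsymbol\nu=(\nu_1,\dots,\nu_K)^\top$, $\mathbf B=(\beta_{jk})_{J\times K}$, $\boldsymbol\beta_j=(\beta_{j1},\dots,\beta_{jK})^\top$; the data are generated from true values $\boldsymbol\nu^*,\mathbf B^*$ with $K$ known. The marginal log-likelihood is $l(\boldsymbol\nu,\mathbf B)=\sum_{i=1}^N\log\big(\sum_{k=1}^K\nu_k\prod_{j=1}^J\beta_{jk}^{Y_{ij}}(1-\beta_{jk})^{1-Y_{ij}}\big)$ and $(\hat{\boldsymbol\nu},\hat{\mathbf B})$ is its maximizer (the MLE). For a vector $\mathbf v$, $\mathrm{card}(\mathbf v)$ denotes the number of distinct entries. Posterior weights: $\hat\gamma_{ik}=\dfrac{\hat\nu_k\prod_{j}\hat\beta_{jk}^{Y_{ij}}(1-\hat\beta_{jk})^{1-Y_{ij}}}{\sum_{h=1}^K\hat\nu_h\prod_{j}\hat\beta_{jh}^{Y_{ij}}(1-\hat\beta_{jh})^{1-Y_{ij}}}$, $\hat{\mathbf\Gamma}=(\hat\gamma_{ik})_{N\times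 K}$. Item-specific pseudo-likelihood: $Q_j(\boldsymbol\beta_j;\hat{\mathbf\Gamma})=\sum_{i=1}^N\sum_{k=1}^K\hat\gamma_{ik}\big(Y_{ij}\log\beta_{jk}+(1-Y_{ij})\log(1-\beta_{jk})\big)$. For an ordered partition $\mathcal C=(C_1,\dots,C_m)$ of $\{1,\dots,K\}$ into nonempty disjoint blocks, the constrained solution is the maximizer of $Q_j(\cdot;\hat{\mathbf\Gamma})$ over $\boldsymbol\beta_j$ that are constant on each block (the paper writes this as maximization over $\Theta_j(\mathcal C)=\{\boldsymbol\beta_j:\beta_{jk}=\beta_{jk'}\ \forall k,k'\in C_l;\ \beta_{jk}<\beta_{jk'}$ if $k\in C_l,k'\in C_{l'},l<l'\}$); for $k\in C_l$ it equals $\sum_i\sum_{k'\in C_l}\hat\gamma_{ik'}Y_{ij}\big/\sum_i\sum_{k'\in C_l}\hat\gamma_{ik'}$. Stepwise search (for each item $j$): let $\pi_j$ be a permutation with $\hat\beta_{j,\pi_j(1)}<\cdots<\hat\beta_{j,\pi_j(K)}$ (the entries of $\hat{\boldsymbol\beta}_j$ are assumed distinct, which holds with probability tending to one; ties broken arbitrarily otherwise). Set $\tilde{\boldsymbol\beta}_j^{(K)}=\hat{\boldsymbol\beta}_j$ and $\mathcal C_j^{(K)}=(\{\pi_j(1)\},\dots,\{\pi_j(K)\})$. For $s=K,K-1,\dots,2$: given $\mathcal C_j^{(s)}=(C_{j1}^{(s)},\dots,C_{js}^{(s)})$, for $b=1,\dots,s-1$ form $\mathcal C_{jb}^{(s-1)}$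 by merging the adjacent blocks $C_{jb}^{(s)}$ and $C_{j,b+1}^{(s)}$ (keeping the order of the others), and let $\tilde{\boldsymbol\beta}_{jb}^{(s-1)}$ be the constrained solution for $\mathcal C_{jb}^{(s-1)}$; choose $b_j^{(s-1)}=\arg\max_b Q_j(\tilde{\boldsymbol\beta}_{jb}^{(s-1)};\hat{\mathbf\Gamma})$ and set $\tilde{\boldsymbol\beta}_j^{(s-1)}=\tilde{\boldsymbol\beta}_{jb_j^{(s-1)}}^{(s-1)}$, $\mathcal C_j^{(s-1)}=\mathcal C_{jb_j^{(s-1)}}^{(s-1)}$. This yields candidates $\tilde{\boldsymbol\beta}_j^{(1)},\dots,\tilde{\boldsymbol\beta}_j^{(K)}$. Extended BIC: $\mathrm{EBIC}_j(m)=-2Q_j(\tilde{\boldsymbol\beta}_j^{(m)};\hat{\mathbf\Gamma})+m\log N+2m\log\rho$ with a constant $\rho\ge 1$, and $\tilde m_j=\arg\min_{1\le m\le K}\mathrm{EBIC}_j(m)$. The refined estimator for item $j$ is $\tilde{\boldsymbol\beta}_j^{(\tilde m_j)}$. *)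

theory Defs
  imports "HOL-Probability.Probability"
begin

text \<open>Conventions: respondents i = 0..N-1, items j = 0..J-1, classes k = 0..K-1.
  Responses are booleans (True = 1).\<close>

definition cprob :: "real \<Rightarrow> bool \<Rightarrow> real" where
  "cprob b y = (if y then b else 1 - b)"

definition param_space :: "nat \<Rightarrow> nat \<Rightarrow> (nat \<Rightarrow> real) \<Rightarrow> (nat \<Rightarrow> nat \<Rightarrow> real) \<Rightarrow> bool" where
  "param_space J K \<nu> B \<longleftrightarrow> (\<forall>k<K. 0 \<le> \<nu> k) \<and> (\<Sum>k<K. \<nu> k) = 1 \<and>
     (\<forall>j<J. \<forall>k<K. 0 \<le> B j k \<and> B j k \<le> 1)"

definition resp_lik :: "nat \<Rightarrow> nat \<Rightarrow> (nat \<Rightarrow> real) \<Rightarrow> (nat \<Rightarrow> nat \<Rightarrow> real) \<Rightarrow> (nat \<Rightarrow> bool) \<Rightarrow> real" where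
  "resp_lik J K \<nu> B y = (\<Sum>k<K. \<nu> k * (\<Prod>j<J. cprob (B j k) (y j)))"

text \<open>Marginal likelihood exp(l(nu,B)); maximizing it is maximizing l with log 0 = -infinity.\<close>
definition likelihood :: "nat \<Rightarrow> nat \<Rightarrow> nat \<Rightarrow> (nat \<Rightarrow> real) \<Rightarrow> (nat \<Rightarrow> nat \<Rightarrow> real) \<Rightarrow> (nat \<Rightarrow> nat \<Rightarrow> bool) \<Rightarrow> real" where
  "likelihood N J K \<nu> B Yd = (\<Prod>i<N. resp_lik J K \<nu> B (Yd i))"

definition is_MLE :: "nat \<Rightarrow> nat \<Rightarrow> nat \<Rightarrow> (nat \<Rightarrow> real) \<Rightarrow> (nat \<Rightarrow> nat \<Rightarrow> real) \<Rightarrow> (nat \<Rightarrow> nat \<Rightarrow> bool) \<Rightarrow> bool" where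
  "is_MLE N J K \<nu>h Bh Yd \<longleftrightarrow> param_space J K \<nu>h Bh \<and>
     (\<forall>\<nu> B. param_space J K \<nu> B \<longrightarrow> likelihood N J K \<nu> B Yd \<le> likelihood N J K \<nu>h Bh Yd)"

definition post_weight :: "nat \<Rightarrow> nat \<Rightarrow> (nat \<Rightarrow> real) \<Rightarrow> (nat \<Rightarrow> nat \<Rightarrow> real) \<Rightarrow> (nat \<Rightarrow> nat \<Rightarrow> bool) \<Rightarrow> nat \<Rightarrow> nat \<Rightarrow> real" where
  "post_weight J K \<nu> B Yd i k = \<nu> k * (\<Prod>j<J. cprob (B j k) (Yd i j)) / resp_lik J K \<nu> B (Yd i)"

definition Qj :: "nat \<Rightarrow> nat \<Rightarrow> (nat \<Rightarrow> nat \<Rightarrow> real) \<Rightarrow> (nat \<Rightarrow> nat \<Rightarrow> bool) \<Rightarrow> nat \<Rightarrow> (nat \<Rightarrow> real) \<Rightarrow> real" where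
  "Qj N K \<Gamma> Yd j \<beta> = (\<Sum>i<N. \<Sum>k<K. \<Gamma> i k * (if Yd i j then ln (\<beta> k) else ln (1 - \<beta> k)))"

definition block_mean :: "nat \<Rightarrow> (nat \<Rightarrow> nat \<Rightarrow> real) \<Rightarrow> (nat \<Rightarrow> nat \<Rightarrow> bool) \<Rightarrow> nat \<Rightarrow> nat set \<Rightarrow> real" where
  "block_mean N \<Gamma> Yd j C = (\<Sum>i<N. \<Sum>k\<in>C. \<Gamma> i k * (if Yd i j then 1 else 0)) / (\<Sum>i<N. \<Sum>k\<in>C. \<Gamma> i k)"

text \<open>Ordered partitions are lists of blocks.\<close>
definition block_of :: "nat set list \<Rightarrow> nat \<Rightarrow> nat set" where
  "block_of P k = (THE C. C \<in> set P \<and> k \<in> C)"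

definition constr_sol :: "nat \<Rightarrow> (nat \<Rightarrow> nat \<Rightarrow> real) \<Rightarrow> (nat \<Rightarrow> nat \<Rightarrow> bool) \<Rightarrow> nat \<Rightarrow> nat set list \<Rightarrow> nat \<Rightarrow> real" where
  "constr_sol N \<Gamma> Yd j P = (\<lambda>k. block_mean N \<Gamma> Yd j (block_of P k))"

definition merge_adj :: "nat set list \<Rightarrow> nat \<Rightarrow> nat set list" where
  "merge_adj P b = take b P @ [P ! b \<union> P ! Suc b] @ drop (Suc (Suc b)) P"

definition best_merge :: "nat \<Rightarrow> nat \<Rightarrow> (nat \<Rightarrow> nat \<Rightarrow> real) \<Rightarrow> (nat \<Rightarrow> nat \<Rightarrow> bool) \<Rightarrow> nat \<Rightarrow> nat set list \<Rightarrow> nat" where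
  "best_merge N K \<Gamma> Yd j P = (LEAST b. b < length P - 1 \<and>
     (\<forall>b'<length P - 1. Qj N K \<Gamma> Yd j (constr_sol N \<Gamma> Yd j (merge_adj P b'))
                       \<le> Qj N K \<Gamma> Yd j (constr_sol N \<Gamma> Yd j (merge_adj P b))))"

definition merge_step :: "nat \<Rightarrow> nat \<Rightarrow> (nat \<Rightarrow> nat \<Rightarrow> real) \<Rightarrow> (nat \<Rightarrow> nat \<Rightarrow> bool) \<Rightarrow> nat \<Rightarrow> nat set list \<Rightarrow> nat set list" where
  "merge_step N K \<Gamma> Yd j P = merge_adj P (best_merge N K \<Gamma> Yd j P)"

definition init_part :: "nat \<Rightarrow> (nat \<Rightarrow> real) \<Rightarrow> nat set list" where
  "init_part K \<beta>h = map (\<lambda>k. {k}) (sort_key \<beta>h [0..<K])"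

definition part_m :: "nat \<Rightarrow> nat \<Rightarrow> (nat \<Rightarrow> nat \<Rightarrow> real) \<Rightarrow> (nat \<Rightarrow> nat \<Rightarrow> bool) \<Rightarrow> nat \<Rightarrow> (nat \<Rightarrow> real) \<Rightarrow> nat \<Rightarrow> nat set list" where
  "part_m N K \<Gamma> Yd j \<beta>h m = (merge_step N K \<Gamma> Yd j ^^ (K - m)) (init_part K \<beta>h)"

definition candidate :: "nat \<Rightarrow> nat \<Rightarrow> (nat \<Rightarrow> nat \<Rightarrow> real) \<Rightarrow> (nat \<Rightarrow> nat \<Rightarrow> bool) \<Rightarrow> nat \<Rightarrow> (nat \<Rightarrow> real) \<Rightarrow> nat \<Rightarrow> nat \<Rightarrow> real" where
  "candidate N K \<Gamma> Yd j \<beta>h m =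
     (if m = K then \<beta>h else constr_sol N \<Gamma> Yd j (part_m N K \<Gamma> Yd j \<beta>h m))"

definition EBIC :: "nat \<Rightarrow> nat \<Rightarrow> (nat \<Rightarrow> nat \<Rightarrow> real) \<Rightarrow> (nat \<Rightarrow> nat \<Rightarrow> bool) \<Rightarrow> nat \<Rightarrow> (nat \<Rightarrow> real) \<Rightarrow> real \<Rightarrow> nat \<Rightarrow> real" where
  "EBIC N K \<Gamma> Yd j \<beta>h \<rho> m = - 2 * Qj N K \<Gamma> Yd j (candidate N K \<Gamma> Yd j \<beta>h m)
      + real m * ln (real N) + 2 * real m * ln \<rho>"

definition m_sel :: "nat \<Rightarrow> nat \<Rightarrow> (nat \<Rightarrow> nat \<Rightarrow> real) \<Rightarrow> (nat \<Rightarrow> nat \<Rightarrow> bool) \<Rightarrow> nat \<Rightarrow> (nat \<Rightarrow> real) \<Rightarrow> real \<Rightarrow> nat" where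
  "m_sel N K \<Gamma> Yd j \<beta>h \<rho> = (LEAST m. 1 \<le> m \<and> m \<le> K \<and>
     (\<forall>m'. 1 \<le> m' \<and> m' \<le> K \<longrightarrow> EBIC N K \<Gamma> Yd j \<beta>h \<rho> m \<le> EBIC N K \<Gamma> Yd j \<beta>h \<rho> m'))"

definition m_tilde :: "nat \<Rightarrow> nat \<Rightarrow> nat \<Rightarrow> real \<Rightarrow> (nat \<Rightarrow> real) \<Rightarrow> (nat \<Rightarrow> nat \<Rightarrow> real) \<Rightarrow> (nat \<Rightarrow> nat \<Rightarrow> bool) \<Rightarrow> nat \<Rightarrow> nat" where
  "m_tilde N J K \<rho> \<nu>h Bh Yd j = m_sel N K (post_weight J K \<nu>h Bh Yd) Yd j (Bh j) \<rho>"

definition beta_tilde :: "nat \<Rightarrow> nat \<Rightarrow> nat \<Rightarrow> real \<Rightarrow> (nat \<Rightarrow> real) \<Rightarrow> (nat \<Rightarrow> nat \<Rightarrow> real) \<Rightarrow> (nat \<Rightarrow> nat \<Rightarrow> bool) \<Rightarrow> nat \<Rightarrow> nat \<Rightarrow> real" where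
  "beta_tilde N J K \<rho> \<nu>h Bh Yd j =
     candidate N K (post_weight J K \<nu>h Bh Yd) Yd j (Bh j) (m_tilde N J K \<rho> \<nu>h Bh Yd j)"

text \<open>X_N = O_p(1): tight sequence of random variables.\<close>
definition bounded_in_prob :: "'a measure \<Rightarrow> (nat \<Rightarrow> 'a \<Rightarrow> real) \<Rightarrow> bool" where
  "bounded_in_prob M X \<longleftrightarrow> (\<forall>\<epsilon>>0. \<exists>C. eventually (\<lambda>N. measure M {\<omega>\<in>space M. \<bar>X N \<omega>\<bar> > C} < \<epsilon>) sequentially)"

end

theory Submission
  imports Defs "HOL-Real_Asymp.Real_Asymp"
begin

(* The argument is deterministic on the event that the MLE lies within T / sqrt N of the true
   parameters, an event whose probability is eventually at least 1 - epsilon by (A1); the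
   distributional assumptions enter only through (A1) and the measurability of the responses. At an
   interior MLE the score equations give sum_i gamma_ik = N nu_hat_k and
   sum_i gamma_ik Y_ij = beta_hat_jk sum_i gamma_ik, so Q_j is the Bernoulli log-likelihood with
   counts N nu_hat_k and success frequencies beta_hat_jk, and replacing beta_hat_j by the block means
   of a partition loses the count-weighted Bernoulli Kullback-Leibler divergences of the beta_hat_jk
   from their block means. For blocks on which the true beta_j is constant this loss is O(T^2); a
   block mixing two different true values loses at least a constant times N delta^2, delta the
   smallest gap between distinct true values. So the greedy adjacent merging only pools classes
   with equal true beta_jk until m_j blocks remain, and since the EBIC penalty per level grows like
   log N, EBIC is minimized exactly at m_j. *)

lemma prod_affine_local_max_imp_sum_zero:
  fixes R d :: "nat \<Rightarrow> real"
  assumes R: "\<forall>i<N. R i > 0" and r: "r > 0"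
    and le: "\<forall>t. \<bar>t\<bar> < r \<longrightarrow> (\<Prod>i<N. R i + t * d i) \<le> (\<Prod>i<N. R i)"
  shows "(\<Sum>i<N. d i / R i) = 0"
proof -
  have der: "((\<lambda>u. \<Prod>i\<in>{..<N}. R i + u * d i) has_field_derivative
      ((\<Prod>i\<in>{..<N}. R i + 0 * d i) * (\<Sum>i\<in>{..<N}. d i / (R i + 0 * d i)))) (at 0)"
    by (rule has_field_derivative_prod') (use R in \<open>auto intro!: derivative_eq_intros\<close>)
  have "(\<Prod>i\<in>{..<N}. R i + 0 * d i) * (\<Sum>i\<in>{..<N}. d i / (R i + 0 * d i)) = 0"
    by (rule DERIV_local_max[OF der r]) (use le in auto)
  moreover have "(\<Prod>i\<in>{..<N}. R i) > 0" using R by (auto intro!: prod_pos)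
  ultimately show ?thesis using R by auto
qed

lemma cprob_add: "cprob (b + t) y = cprob b y + t * (if y then 1 else -1)"
  by (simp add: cprob_def)

lemma cprob_nonneg: "0 \<le> b \<Longrightarrow> b \<le> 1 \<Longrightarrow> 0 \<le> cprob b y"
  by (simp add: cprob_def)

lemma resp_lik_shift_item_param:
  assumes j: "j < J" and k: "k < K"
  shows "resp_lik J K \<nu> (B(j := (B j)(k := B j k + t))) y
     = resp_lik J K \<nu> B y + t * (\<nu> k * (\<Prod>j'\<in>{..<J}-{j}. cprob (B j' k) (y j')) * (if y j then 1 else -1))"
proof -
  let ?B' = "B(j := (B j)(k := B j k + t))"
  let ?rest = "\<Prod>j'\<in>{..<J}-{j}. cprob (B j' k) (y j')"
  let ?others = "\<Sum>k'\<in>{..<K}-{k}. \<nu> k' * (\<Prod>j'<J. cprob (B j' k') (y j'))"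
  have others: "(\<Sum>k'\<in>{..<K}-{k}. \<nu> k' * (\<Prod>j'<J. cprob (?B' j' k') (y j'))) = ?others"
    by (intro sum.cong refl arg_cong2[where f="(*)"] prod.cong) auto
  have rest: "(\<Prod>j'\<in>{..<J}-{j}. cprob (?B' j' k) (y j')) = ?rest"
    by (intro prod.cong) auto
  have new: "(\<Prod>j'<J. cprob (?B' j' k) (y j')) = cprob (B j k + t) (y j) * ?rest"
    using prod.remove[of "{..<J}" j "\<lambda>j'. cprob (?B' j' k) (y j')"] j rest by simp
  have old: "(\<Prod>j'<J. cprob (B j' k) (y j')) = cprob (B j k) (y j) * ?rest"
    using prod.remove[of "{..<J}" j "\<lambda>j'. cprob (B j' k) (y j')"] j by simp
  have "resp_lik J K \<nu> ?B' y
      = \<nu> k * (\<Prod>j'<J. cprob (?B' j' k) (y j')) + (\<Sum>k'\<in>{..<K}-{k}. \<nu> k' * (\<Prod>j'<J. cprob (?B' j' k') (y j')))"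
    unfolding resp_lik_def using sum.remove[of "{..<K}" k] k by simp
  also have "\<dots> = \<nu> k * (\<Prod>j'<J. cprob (?B' j' k) (y j')) + ?others"
    unfolding others ..
  also have "\<dots> = \<nu> k * (\<Prod>j'<J. cprob (B j' k) (y j')) + ?others
      + t * (\<nu> k * ?rest * (if y j then 1 else -1))"
    unfolding new old cprob_add by (simp add: algebra_simps)
  also have "\<nu> k * (\<Prod>j'<J. cprob (B j' k) (y j')) + ?others = resp_lik J K \<nu> B y"
    unfolding resp_lik_def using sum.remove[of "{..<K}" k "\<lambda>k'. \<nu> k' * (\<Prod>j'<J. cprob (B j' k') (y j'))"] k
    by simp
  finally show ?thesis .
qed

lemma resp_lik_shift_class_weight:
  assumes "k < K" "l < K"
  shows "resp_lik J K (\<lambda>k'. \<nu> k' + t * ((if k' = k then 1 else 0) - (if k' = l then 1 else 0))) B y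
     = resp_lik J K \<nu> B y + t * ((\<Prod>j<J. cprob (B j k) (y j)) - (\<Prod>j<J. cprob (B j l) (y j)))"
proof -
  let ?F = "\<lambda>k. (\<Prod>j<J. cprob (B j k) (y j))"
  have pick: "(\<Sum>k'<K. (if k' = m then 1 else 0) * ?F k') = ?F m" if "m < K" for m
  proof -
    have "(\<Sum>k'<K. (if k' = m then 1 else 0) * ?F k') = (\<Sum>k'<K. if k' = m then ?F k' else 0)"
      by (intro sum.cong) auto
    also have "\<dots> = ?F m" using that by simp
    finally show ?thesis .
  qed
  have "resp_lik J K (\<lambda>k'. \<nu> k' + t * ((if k' = k then 1 else 0) - (if k' = l then 1 else 0))) B y
     = (\<Sum>k'<K. \<nu> k' * ?F k') + t * ((\<Sum>k'<K. (if k' = k then 1 else 0) * ?F k')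
         - (\<Sum>k'<K. (if k' = l then 1 else 0) * ?F k'))"
    unfolding resp_lik_def by (simp add: algebra_simps sum.distrib sum_subtractf sum_distrib_left)
  then show ?thesis unfolding pick[OF assms(1)] pick[OF assms(2)] resp_lik_def .
qed

lemma resp_lik_nonneg:
  assumes "param_space J K \<nu> B" shows "0 \<le> resp_lik J K \<nu> B y"
  using assms unfolding resp_lik_def param_space_def
  by (auto intro!: sum_nonneg mult_nonneg_nonneg prod_nonneg cprob_nonneg)

lemma is_MLE_resp_lik_pos:
  assumes mle: "is_MLE N J K \<nu> B Yd" and ps: "param_space J K \<nu>0 B0"
    and pos: "\<forall>i<N. resp_lik J K \<nu>0 B0 (Yd i) > 0" and i: "i < N"
  shows "resp_lik J K \<nu> B (Yd i) > 0"
proof -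
  have "0 < likelihood N J K \<nu>0 B0 Yd" unfolding likelihood_def using pos by (auto intro!: prod_pos)
  also have "\<dots> \<le> likelihood N J K \<nu> B Yd" using mle ps unfolding is_MLE_def by auto
  finally have "resp_lik J K \<nu> B (Yd i) \<noteq> 0"
    using i prod_zero[of "{..<N}" "\<lambda>i. resp_lik J K \<nu> B (Yd i)"] unfolding likelihood_def
    by (metis finite_lessThan lessThan_iff less_irrefl)
  moreover have "0 \<le> resp_lik J K \<nu> B (Yd i)" using mle resp_lik_nonneg unfolding is_MLE_def by blast
  ultimately show ?thesis by linarith
qed

lemma sum_post_weight:
  assumes "resp_lik J K \<nu> B (Yd i) > 0"
  shows "(\<Sum>k<K. post_weight J K \<nu> B Yd i k) = 1"
  using assms unfolding post_weight_def resp_lik_def by (simp add: sum_divide_distrib[symmetric])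

(* Both score equations come from perturbing the MLE along a line inside the parameter space:
   the likelihood is then a product of affine functions of the step length. *)

lemma is_MLE_item_score_eq:
  assumes mle: "is_MLE N J K \<nu> B Yd" and j: "j < J" and k: "k < K"
    and b: "0 < B j k" "B j k < 1" and R: "\<forall>i<N. resp_lik J K \<nu> B (Yd i) > 0"
  shows "(\<Sum>i<N. post_weight J K \<nu> B Yd i k * (if Yd i j then 1 else 0))
       = B j k * (\<Sum>i<N. post_weight J K \<nu> B Yd i k)"
proof -
  define Rr where "Rr i = resp_lik J K \<nu> B (Yd i)" for i
  define rest where "rest i = \<nu> k * (\<Prod>j'\<in>{..<J}-{j}. cprob (B j' k) (Yd i j'))" for i
  define s where "s i = (if Yd i j then 1 else -1::real)" for i
  define r where "r = min (B j k) (1 - B j k)"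
  have r: "r > 0" using b unfolding r_def by auto
  have le: "\<forall>t. \<bar>t\<bar> < r \<longrightarrow> (\<Prod>i<N. Rr i + t * (rest i * s i)) \<le> (\<Prod>i<N. Rr i)"
  proof (intro allI impI)
    fix t :: real assume t: "\<bar>t\<bar> < r"
    let ?B' = "B(j := (B j)(k := B j k + t))"
    have "param_space J K \<nu> ?B'"
      using mle t unfolding is_MLE_def param_space_def r_def by auto
    then have "likelihood N J K \<nu> ?B' Yd \<le> likelihood N J K \<nu> B Yd" using mle unfolding is_MLE_def by auto
    then show "(\<Prod>i<N. Rr i + t * (rest i * s i)) \<le> (\<Prod>i<N. Rr i)"
      unfolding likelihood_def resp_lik_shift_item_param[OF j k] Rr_def rest_def s_def by (simp add: mult.assoc)
  qed
  have score: "(\<Sum>i<N. rest i * s i / Rr i) = 0"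
    by (rule prod_affine_local_max_imp_sum_zero[OF _ r le]) (use R in \<open>simp add: Rr_def\<close>)
  have pw: "post_weight J K \<nu> B Yd i k = rest i / Rr i * cprob (B j k) (Yd i j)" for i
  proof -
    have "(\<Prod>j'<J. cprob (B j' k) (Yd i j')) = cprob (B j k) (Yd i j) * (\<Prod>j'\<in>{..<J}-{j}. cprob (B j' k) (Yd i j'))"
      using prod.remove[of "{..<J}" j "\<lambda>j'. cprob (B j' k) (Yd i j')"] j by simp
    then show ?thesis unfolding post_weight_def rest_def Rr_def by simp
  qed
  have "(\<Sum>i<N. B j k * post_weight J K \<nu> B Yd i k - post_weight J K \<nu> B Yd i k * (if Yd i j then 1 else 0))
      = (- (B j k * (1 - B j k))) * (\<Sum>i<N. rest i * s i / Rr i)"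
    unfolding sum_distrib_left
    by (intro sum.cong refl) (auto simp: pw s_def cprob_def algebra_simps diff_divide_distrib add_divide_distrib)
  then show ?thesis using score by (simp add: sum_subtractf sum_distrib_left)
qed

lemma is_MLE_class_score_eq:
  assumes mle: "is_MLE N J K \<nu> B Yd" and K: "1 \<le> K"
    and nu: "\<forall>k<K. 0 < \<nu> k" and R: "\<forall>i<N. resp_lik J K \<nu> B (Yd i) > 0"
  shows "\<forall>k<K. (\<Sum>i<N. post_weight J K \<nu> B Yd i k) = real N * \<nu> k"
proof -
  define Rr where "Rr i = resp_lik J K \<nu> B (Yd i)" for i
  define F where "F i k = (\<Prod>j<J. cprob (B j k) (Yd i j))" for i k
  define lam where "lam k = (\<Sum>i<N. F i k / Rr i)" for k
  have Rp: "\<forall>i<N. Rr i > 0" using R unfolding Rr_def by auto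
  have lam_const: "lam k = lam l" if k: "k < K" and l: "l < K" and kl: "k \<noteq> l" for k l
  proof -
    define r where "r = min (\<nu> k) (\<nu> l)"
    have r: "r > 0" using nu k l unfolding r_def by auto
    have le: "\<forall>t. \<bar>t\<bar> < r \<longrightarrow> (\<Prod>i<N. Rr i + t * (F i k - F i l)) \<le> (\<Prod>i<N. Rr i)"
    proof (intro allI impI)
      fix t :: real assume t: "\<bar>t\<bar> < r"
      let ?nu = "\<lambda>k'. \<nu> k' + t * ((if k' = k then 1 else 0) - (if k' = l then 1 else 0))"
      have "(\<Sum>k'<K. ?nu k') = (\<Sum>k'<K. \<nu> k')"
        using k l kl by (simp add: sum.distrib sum_distrib_left[symmetric] sum_subtractf)
      then have "param_space J K ?nu B"
        using mle t unfolding is_MLE_def param_space_def r_def by auto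
      then have "likelihood N J K ?nu B Yd \<le> likelihood N J K \<nu> B Yd" using mle unfolding is_MLE_def by auto
      then show "(\<Prod>i<N. Rr i + t * (F i k - F i l)) \<le> (\<Prod>i<N. Rr i)"
        unfolding likelihood_def resp_lik_shift_class_weight[OF k l] Rr_def F_def by simp
    qed
    have "(\<Sum>i<N. (F i k - F i l) / Rr i) = 0" by (rule prod_affine_local_max_imp_sum_zero[OF Rp r le])
    then show ?thesis unfolding lam_def by (simp add: diff_divide_distrib sum_subtractf)
  qed
  have col: "(\<Sum>i<N. post_weight J K \<nu> B Yd i k) = \<nu> k * lam 0" if "k < K" for k
  proof -
    have "(\<Sum>i<N. post_weight J K \<nu> B Yd i k) = \<nu> k * lam k"
      unfolding post_weight_def lam_def F_def Rr_def by (simp add: sum_distrib_left)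
    then show ?thesis using lam_const[OF that, of 0] K by (cases "k = 0") auto
  qed
  have "real N = (\<Sum>i<N. \<Sum>k<K. post_weight J K \<nu> B Yd i k)"
    using sum_post_weight R by simp
  also have "\<dots> = (\<Sum>k<K. \<nu> k * lam 0)" by (subst sum.swap) (simp add: col)
  also have "\<dots> = lam 0"
    using mle unfolding is_MLE_def param_space_def by (simp add: sum_distrib_right[symmetric])
  finally show ?thesis using col by simp
qed

definition bern_kl :: "real \<Rightarrow> real \<Rightarrow> real" where
  "bern_kl p q = p * (ln p - ln q) + (1 - p) * (ln (1 - p) - ln (1 - q))"

lemma sq_mult_ln_sq_ratio_ge:
  fixes a b :: real assumes "0 < a" "0 < b"
  shows "2 * a * a - 2 * a * b \<le> a * a * (ln (a * a) - ln (b * b))"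
proof -
  have "ln (b / a) \<le> b / a - 1" using assms by (intro ln_le_minus_one) auto
  then have "a * a * (ln b - ln a) \<le> a * a * (b / a - 1)"
    using assms by (intro mult_left_mono) (auto simp: ln_div)
  also have "\<dots> = a * b - a * a" using assms by (simp add: field_simps)
  finally show ?thesis using assms by (simp add: ln_mult algebra_simps)
qed

(* The divergence dominates the squared Hellinger distance (a - b)^2 + (c - d)^2 for
   a = sqrt p, b = sqrt q, c = sqrt (1 - p), d = sqrt (1 - q), and (p - q)^2 = (a - b)^2 (a + b)^2. *)
lemma bern_kl_ge_sq:
  assumes p: "0 < p" "p < 1" and q: "0 < q" "q < 1"
  shows "(p - q)^2 / 4 \<le> bern_kl p q"
proof -
  define a b c d where "a = sqrt p" and "b = sqrt q" and "c = sqrt (1 - p)" and "d = sqrt (1 - q)"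
  have pos: "0 < a" "0 < b" "0 < c" "0 < d" using p q unfolding a_def b_def c_def d_def by auto
  have sq: "a * a = p" "b * b = q" "c * c = 1 - p" "d * d = 1 - q"
    using p q unfolding a_def b_def c_def d_def by auto
  have hellinger: "(a - b)^2 + (c - d)^2 \<le> bern_kl p q"
    using sq_mult_ln_sq_ratio_ge[OF pos(1,2)] sq_mult_ln_sq_ratio_ge[OF pos(3,4)] sq
    unfolding bern_kl_def by (simp add: power2_eq_square algebra_simps)
  have "(a + b)^2 \<le> 4"
  proof -
    have "a \<le> 1" "b \<le> 1" using p q unfolding a_def b_def by auto
    then have "(a + b) * (a + b) \<le> 2 * 2" using pos by (intro mult_mono) auto
    then show ?thesis by (simp add: power2_eq_square)
  qed
  then have "(a - b)^2 * (a + b)^2 \<le> (a - b)^2 * 4" by (intro mult_left_mono) auto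
  moreover have "(p - q)^2 = (a - b)^2 * (a + b)^2" using sq by (simp add: power2_eq_square algebra_simps)
  ultimately show ?thesis using hellinger zero_le_power2[of "c - d"] by linarith
qed

lemma bern_kl_le_chi_sq:
  assumes p: "0 < p" "p < 1" and q: "0 < q" "q < 1"
  shows "bern_kl p q \<le> (p - q)^2 / (q * (1 - q))"
proof -
  have l1: "ln p - ln q \<le> p / q - 1"
    using ln_le_minus_one[of "p / q"] p q by (simp add: ln_div)
  have l2: "ln (1 - p) - ln (1 - q) \<le> (1 - p) / (1 - q) - 1"
    using ln_le_minus_one[of "(1 - p) / (1 - q)"] p q by (simp add: ln_div)
  have "bern_kl p q \<le> p * (p / q - 1) + (1 - p) * ((1 - p) / (1 - q) - 1)"
    unfolding bern_kl_def using l1 l2 p by (intro add_mono mult_left_mono) auto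
  also have "\<dots> = (p - q)^2 / (q * (1 - q))" using q by (simp add: field_simps power2_eq_square)
  finally show ?thesis .
qed

lemma bern_kl_nonneg: "0 < p \<Longrightarrow> p < 1 \<Longrightarrow> 0 < q \<Longrightarrow> q < 1 \<Longrightarrow> 0 \<le> bern_kl p q"
  using bern_kl_ge_sq[of p q] by (smt (verit) divide_nonneg_nonneg zero_le_power2)

lemma bern_kl_le_of_margin:
  assumes p: "0 < p" "p < 1" and a: "0 < a" and q: "a / 2 \<le> q" "q \<le> 1 - a / 2"
    and pq: "\<bar>p - q\<bar> \<le> e"
  shows "bern_kl p q \<le> 4 * e^2 / a"
proof -
  have q01: "0 < q" "q < 1" using a q by linarith+
  have sq: "(p - q)^2 \<le> e^2"
    using power_mono[OF pq abs_ge_zero, of 2] by simp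
  have den: "a / 4 \<le> q * (1 - q)"
  proof (cases "q \<le> 1/2")
    case True
    then have "a / 2 * (1 / 2) \<le> q * (1 - q)" using q q01 by (intro mult_mono) auto
    then show ?thesis by simp
  next
    case False
    then have "(1 / 2) * (a / 2) \<le> q * (1 - q)" using q a by (intro mult_mono) auto
    then show ?thesis by simp
  qed
  have "bern_kl p q \<le> (p - q)^2 / (q * (1 - q))" using bern_kl_le_chi_sq p q01 by blast
  also have "\<dots> \<le> e^2 / (a / 4)" using sq den a q01 by (intro frac_le) auto
  finally show ?thesis by (simp add: mult.commute)
qed

lemma bern_kl_pair_ge:
  assumes "0 < p1" "p1 < 1" "0 < p2" "p2 < 1" "0 < q" "q < 1"
  shows "(p1 - p2)^2 / 8 \<le> bern_kl p1 q + bern_kl p2 q"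
proof -
  have "2 * ((p1 - q)^2 + (p2 - q)^2) - (p1 - p2)^2 = (p1 + p2 - 2 * q)^2"
    by (simp add: power2_eq_square algebra_simps)
  then have "(p1 - p2)^2 \<le> 2 * ((p1 - q)^2 + (p2 - q)^2)"
    using zero_le_power2[of "p1 + p2 - 2 * q"] by linarith
  moreover have "(p1 - q)^2 / 4 \<le> bern_kl p1 q" by (rule bern_kl_ge_sq) (use assms in auto)
  moreover have "(p2 - q)^2 / 4 \<le> bern_kl p2 q" by (rule bern_kl_ge_sq) (use assms in auto)
  ultimately show ?thesis by simp
qed

definition bern_loglik :: "nat \<Rightarrow> (nat \<Rightarrow> real) \<Rightarrow> (nat \<Rightarrow> real) \<Rightarrow> (nat \<Rightarrow> real) \<Rightarrow> real" where
  "bern_loglik K n p \<beta> = (\<Sum>k<K. n k * (p k * ln (\<beta> k) + (1 - p k) * ln (1 - \<beta> k)))"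

definition weighted_mean :: "(nat \<Rightarrow> real) \<Rightarrow> (nat \<Rightarrow> real) \<Rightarrow> nat set \<Rightarrow> real" where
  "weighted_mean n p C = (\<Sum>k\<in>C. n k * p k) / (\<Sum>k\<in>C. n k)"

lemma bern_loglik_loss_eq_sum_kl:
  "bern_loglik K n p p - bern_loglik K n p \<beta> = (\<Sum>k<K. n k * bern_kl (p k) (\<beta> k))"
  unfolding bern_loglik_def bern_kl_def by (simp add: sum_subtractf[symmetric] algebra_simps)

lemma bern_loglik_cong: "(\<And>k. k < K \<Longrightarrow> \<beta> k = \<beta>' k) \<Longrightarrow> bern_loglik K n p \<beta> = bern_loglik K n p \<beta>'"
  unfolding bern_loglik_def by (intro sum.cong) auto

lemma weighted_mean_bounds:
  assumes "finite C" "C \<noteq> {}" "\<forall>k\<in>C. 0 < n k \<and> lo \<le> p k \<and> p k \<le> hi"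
  shows "lo \<le> weighted_mean n p C \<and> weighted_mean n p C \<le> hi"
proof -
  have S: "0 < (\<Sum>k\<in>C. n k)" using assms by (intro sum_pos) auto
  have "lo * (\<Sum>k\<in>C. n k) \<le> (\<Sum>k\<in>C. n k * p k)"
    unfolding sum_distrib_left using assms by (intro sum_mono) (auto simp: mult.commute)
  moreover have "(\<Sum>k\<in>C. n k * p k) \<le> hi * (\<Sum>k\<in>C. n k)"
    unfolding sum_distrib_left using assms by (intro sum_mono) (auto simp: mult.commute)
  ultimately show ?thesis unfolding weighted_mean_def using S by (simp add: field_simps)
qed

lemma Qj_eq_bern_loglik:
  assumes score: "\<forall>k<K. (\<Sum>i<N. \<Gamma> i k * (if Yd i j then 1 else 0)) = p k * (\<Sum>i<N. \<Gamma> i k)"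
  shows "Qj N K \<Gamma> Yd j \<beta> = bern_loglik K (\<lambda>k. \<Sum>i<N. \<Gamma> i k) p \<beta>"
proof -
  have split: "\<Gamma> i k * (if Yd i j then ln (\<beta> k) else ln (1 - \<beta> k))
     = (\<Gamma> i k * (if Yd i j then 1 else 0)) * ln (\<beta> k)
       + (\<Gamma> i k - \<Gamma> i k * (if Yd i j then 1 else 0)) * ln (1 - \<beta> k)" for i k
    by auto
  have "Qj N K \<Gamma> Yd j \<beta> = (\<Sum>k<K. \<Sum>i<N. \<Gamma> i k * (if Yd i j then ln (\<beta> k) else ln (1 - \<beta> k)))"
    unfolding Qj_def by (rule sum.swap)
  also have "\<dots> = (\<Sum>k<K. (\<Sum>i<N. \<Gamma> i k * (if Yd i j then 1 else 0)) * ln (\<beta> k)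
        + ((\<Sum>i<N. \<Gamma> i k) - (\<Sum>i<N. \<Gamma> i k * (if Yd i j then 1 else 0))) * ln (1 - \<beta> k))"
    unfolding split by (intro sum.cong refl) (simp add: sum.distrib sum_distrib_right sum_subtractf left_diff_distrib)
  also have "\<dots> = bern_loglik K (\<lambda>k. \<Sum>i<N. \<Gamma> i k) p \<beta>"
    unfolding bern_loglik_def using score by (intro sum.cong) (auto simp: algebra_simps)
  finally show ?thesis .
qed

lemma block_mean_eq_weighted_mean:
  assumes score: "\<forall>k<K. (\<Sum>i<N. \<Gamma> i k * (if Yd i j then 1 else 0)) = p k * (\<Sum>i<N. \<Gamma> i k)"
    and C: "C \<subseteq> {..<K}"
  shows "block_mean N \<Gamma> Yd j C = weighted_mean (\<lambda>k. \<Sum>i<N. \<Gamma> i k) p C"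
proof -
  have "(\<Sum>i<N. \<Sum>k\<in>C. \<Gamma> i k * (if Yd i j then 1 else 0)) = (\<Sum>k\<in>C. \<Sum>i<N. \<Gamma> i k * (if Yd i j then 1 else 0))"
    by (rule sum.swap)
  also have "\<dots> = (\<Sum>k\<in>C. (\<Sum>i<N. \<Gamma> i k) * p k)" using score C by (intro sum.cong) auto
  finally show ?thesis unfolding block_mean_def weighted_mean_def by (simp add: sum.swap[of _ "{..<N}"])
qed

definition block_partition :: "nat \<Rightarrow> nat set list \<Rightarrow> bool" where
  "block_partition K P \<longleftrightarrow> (\<forall>a<length P. P ! a \<noteq> {}) \<and>
     (\<forall>a<length P. \<forall>b<length P. a \<noteq> b \<longrightarrow> P ! a \<inter> P ! b = {}) \<and> \<Union>(set P) = {..<K}"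

definition blocks_sorted :: "(nat \<Rightarrow> real) \<Rightarrow> nat set list \<Rightarrow> bool" where
  "blocks_sorted v P \<longleftrightarrow> (\<forall>a b. a < b \<longrightarrow> b < length P \<longrightarrow> (\<forall>x\<in>P ! a. \<forall>y\<in>P ! b. v x \<le> v y))"

definition blocks_homogeneous :: "(nat \<Rightarrow> real) \<Rightarrow> nat set list \<Rightarrow> bool" where
  "blocks_homogeneous v P \<longleftrightarrow> (\<forall>a<length P. \<forall>x\<in>P ! a. \<forall>y\<in>P ! a. v x = v y)"

lemma mem_Union_set_conv_nth: "x \<in> \<Union>(set P) \<longleftrightarrow> (\<exists>a<length P. x \<in> P ! a)"
  by (auto simp: in_set_conv_nth) (use nth_mem in blast)

lemma length_merge_adj: "Suc b < length P \<Longrightarrow> length (merge_adj P b) = length P - 1"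
  unfolding merge_adj_def by simp

lemma nth_merge_adj:
  assumes "Suc b < length P" "x < length P - 1"
  shows "merge_adj P b ! x = (if x < b then P ! x else if x = b then P ! b \<union> P ! Suc b else P ! Suc x)"
  using assms unfolding merge_adj_def by (auto simp: nth_append min_def)

lemma mem_merge_adj:
  assumes b: "Suc b < length P" and x: "x < length P - 1"
  shows "z \<in> merge_adj P b ! x \<longleftrightarrow> (\<exists>a<length P. z \<in> P ! a \<and> (if a \<le> b then a else a - 1) = x)"
proof
  assume "z \<in> merge_adj P b ! x"
  then consider "x < b" "z \<in> P ! x" | "x = b" "z \<in> P ! b" | "x = b" "z \<in> P ! Suc b"
    | "b < x" "z \<in> P ! Suc x"
    using b x by (auto simp: nth_merge_adj split: if_splits)
  then show "\<exists>a<length P. z \<in> P ! a \<and> (if a \<le> b then a else a - 1) = x"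
  proof cases
    case 1
    then show ?thesis using b by (intro exI[of _ x]) auto
  next
    case 2
    then show ?thesis using b by (intro exI[of _ b]) auto
  next
    case 3
    then show ?thesis using b by (intro exI[of _ "Suc b"]) auto
  next
    case 4
    then show ?thesis using x by (intro exI[of _ "Suc x"]) auto
  qed
next
  assume "\<exists>a<length P. z \<in> P ! a \<and> (if a \<le> b then a else a - 1) = x"
  then obtain a where a: "a < length P" "z \<in> P ! a" "(if a \<le> b then a else a - 1) = x" by blast
  then show "z \<in> merge_adj P b ! x"
    using b x by (cases "a \<le> b"; cases "a = b"; cases "a = Suc b") (auto simp: nth_merge_adj)
qed

lemma block_partition_nth_subset: "block_partition K P \<Longrightarrow> a < length P \<Longrightarrow> P ! a \<subseteq> {..<K}"
  unfolding block_partition_def using nth_mem[of a P] by blast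

lemma block_partition_covers:
  assumes "block_partition K P" and "k < K"
  shows "\<exists>a<length P. k \<in> P ! a"
  using assms unfolding block_partition_def mem_Union_set_conv_nth[symmetric] by blast

lemma block_of_nth:
  assumes P: "block_partition K P" and a: "a < length P" and k: "k \<in> P ! a"
  shows "block_of P k = P ! a"
  unfolding block_of_def
proof (rule the_equality)
  show "P ! a \<in> set P \<and> k \<in> P ! a" using a k by auto
  fix C assume "C \<in> set P \<and> k \<in> C"
  then obtain a' where "a' < length P" "C = P ! a'" "k \<in> P ! a'" by (auto simp: in_set_conv_nth)
  with P a k show "C = P ! a" unfolding block_partition_def by blast
qed

lemma block_partition_merge_adj:
  assumes P: "block_partition K P" and b: "Suc b < length P"
  shows "block_partition K (merge_adj P b)"
proof -
  let ?Q = "merge_adj P b" and ?pos = "\<lambda>a. if a \<le> b then a else a - 1"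
  have len: "length ?Q = length P - 1" using b by (rule length_merge_adj)
  have mem: "z \<in> ?Q ! x \<longleftrightarrow> (\<exists>a<length P. z \<in> P ! a \<and> ?pos a = x)" if "x < length ?Q" for x z
    using mem_merge_adj[OF b] that len by simp
  have pos: "?pos a < length ?Q" if "a < length P" for a
    using that b len by auto
  have nonempty: "?Q ! x \<noteq> {}" if x: "x < length ?Q" for x
  proof -
    let ?a = "if x \<le> b then x else Suc x"
    have a: "?a < length P" "?pos ?a = x" using x len by auto
    then obtain z where "z \<in> P ! ?a" using P unfolding block_partition_def by blast
    then show ?thesis using mem[OF x] a by blast
  qed
  have disjoint: "?Q ! x \<inter> ?Q ! y = {}" if xy: "x < length ?Q" "y < length ?Q" "x \<noteq> y" for x y
  proof (rule ccontr)
    assume "?Q ! x \<inter> ?Q ! y \<noteq> {}"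
    then obtain z a c where "a < length P" "z \<in> P ! a" "?pos a = x" "c < length P" "z \<in> P ! c" "?pos c = y"
      using mem[OF xy(1)] mem[OF xy(2)] by blast
    moreover from this have "a = c" using P unfolding block_partition_def by blast
    ultimately show False using xy(3) by (simp split: if_splits)
  qed
  have "\<Union>(set ?Q) = \<Union>(set P)"
  proof (rule set_eqI)
    fix z
    have "z \<in> \<Union>(set ?Q) \<Longrightarrow> z \<in> \<Union>(set P)"
      using mem unfolding mem_Union_set_conv_nth by blast
    moreover have "z \<in> \<Union>(set P) \<Longrightarrow> z \<in> \<Union>(set ?Q)"
      using mem pos unfolding mem_Union_set_conv_nth by blast
    ultimately show "z \<in> \<Union>(set ?Q) \<longleftrightarrow> z \<in> \<Union>(set P)" by blast
  qed
  then show ?thesis using P nonempty disjoint unfolding block_partition_def by simp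
qed

lemma blocks_sorted_merge_adj:
  assumes sorted: "blocks_sorted v P" and b: "Suc b < length P"
  shows "blocks_sorted v (merge_adj P b)"
  unfolding blocks_sorted_def length_merge_adj[OF b]
proof (intro allI impI ballI)
  fix x y a c assume ac: "a < c" "c < length P - 1"
    and x: "x \<in> merge_adj P b ! a" and y: "y \<in> merge_adj P b ! c"
  obtain a' where a': "a' < length P" "x \<in> P ! a'" "(if a' \<le> b then a' else a' - 1) = a"
    using mem_merge_adj[OF b, of a x] x ac by auto
  obtain c' where c': "c' < length P" "y \<in> P ! c'" "(if c' \<le> b then c' else c' - 1) = c"
    using mem_merge_adj[OF b, of c y] y ac by auto
  have "a' < c'" using a' c' ac by (auto split: if_splits)
  then show "v x \<le> v y" using sorted a' c' unfolding blocks_sorted_def by blast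
qed

lemma blocks_homogeneous_merge_adj:
  assumes hom: "blocks_homogeneous v P" and b: "Suc b < length P"
    and merged: "\<forall>x\<in>P ! b \<union> P ! Suc b. \<forall>y\<in>P ! b \<union> P ! Suc b. v x = v y"
  shows "blocks_homogeneous v (merge_adj P b)"
  unfolding blocks_homogeneous_def length_merge_adj[OF b]
proof (intro allI impI ballI)
  fix a x y assume a: "a < length P - 1" and x: "x \<in> merge_adj P b ! a" and y: "y \<in> merge_adj P b ! a"
  obtain a' where a': "a' < length P" "x \<in> P ! a'" "(if a' \<le> b then a' else a' - 1) = a"
    using mem_merge_adj[OF b a] x by blast
  obtain c' where c': "c' < length P" "y \<in> P ! c'" "(if c' \<le> b then c' else c' - 1) = a"
    using mem_merge_adj[OF b a] y by blast
  show "v x = v y"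
  proof (cases "a' = c'")
    case True
    then show ?thesis using hom a' c' unfolding blocks_homogeneous_def by blast
  next
    case False
    then have "a' \<in> {b, Suc b}" "c' \<in> {b, Suc b}" using a'(3) c'(3) by (auto split: if_splits)
    then have "x \<in> P ! b \<union> P ! Suc b" "y \<in> P ! b \<union> P ! Suc b" using a'(2) c'(2) by auto
    then show ?thesis using merged by blast
  qed
qed

lemma block_partition_singletons:
  assumes "distinct xs" "set xs = {..<K}"
  shows "block_partition K (map (\<lambda>k. {k}) xs)"
  using assms unfolding block_partition_def by (auto simp: nth_eq_iff_index_eq)

lemma blocks_sorted_singletons:
  assumes sorted: "sorted (map p xs)" and set: "set xs = {..<K}"
    and ord: "\<forall>x<K. \<forall>y<K. p x \<le> p y \<longrightarrow> v x \<le> v y"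
  shows "blocks_sorted v (map (\<lambda>k. {k}) xs)"
  unfolding blocks_sorted_def
proof (intro allI impI ballI)
  fix a b x y assume ab: "a < b" "b < length (map (\<lambda>k. {k}) xs)"
    and x: "x \<in> map (\<lambda>k. {k}) xs ! a" and y: "y \<in> map (\<lambda>k. {k}) xs ! b"
  have "x = xs ! a" "y = xs ! b" "xs ! a < K" "xs ! b < K"
    using x y ab set nth_mem[of a xs] nth_mem[of b xs] by auto
  moreover have "p (xs ! a) \<le> p (xs ! b)"
    using sorted ab unfolding sorted_iff_nth_mono by simp
  ultimately show "v x \<le> v y" using ord by blast
qed

lemma length_init_part: "length (init_part K p) = K"
  unfolding init_part_def by simp

lemma block_partition_init_part: "block_partition K (init_part K p)"
  unfolding init_part_def by (rule block_partition_singletons) (auto simp: atLeast0LessThan)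

lemma blocks_homogeneous_init_part: "blocks_homogeneous v (init_part K p)"
  unfolding init_part_def blocks_homogeneous_def by auto

lemma blocks_sorted_init_part:
  assumes "\<forall>x<K. \<forall>y<K. p x \<le> p y \<longrightarrow> v x \<le> v y"
  shows "blocks_sorted v (init_part K p)"
  unfolding init_part_def
  by (rule blocks_sorted_singletons[OF sorted_sort_key _ assms]) (simp add: atLeast0LessThan)

lemma best_merge_is_argmax:
  assumes "2 \<le> length P"
  shows "best_merge N K \<Gamma> Yd j P < length P - 1 \<and>
    (\<forall>b'<length P - 1. Qj N K \<Gamma> Yd j (constr_sol N \<Gamma> Yd j (merge_adj P b'))
        \<le> Qj N K \<Gamma> Yd j (constr_sol N \<Gamma> Yd j (merge_adj P (best_merge N K \<Gamma> Yd j P))))"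
proof -
  let ?f = "\<lambda>b. Qj N K \<Gamma> Yd j (constr_sol N \<Gamma> Yd j (merge_adj P b))"
  have "Max (?f ` {..<length P - 1}) \<in> ?f ` {..<length P - 1}"
    using assms by (intro Max_in) (auto simp: lessThan_empty_iff)
  then obtain b where b: "b < length P - 1" "?f b = Max (?f ` {..<length P - 1})" by auto
  then have "\<forall>b'<length P - 1. ?f b' \<le> ?f b" by simp
  with b(1) have "\<exists>b<length P - 1. \<forall>b'<length P - 1. ?f b' \<le> ?f b" by blast
  then show ?thesis unfolding best_merge_def by (rule LeastI_ex)
qed

definition block_rep :: "nat set list \<Rightarrow> nat \<Rightarrow> nat" where
  "block_rep P a = (SOME x. x \<in> P ! a)"

lemma block_rep_mem: "block_partition K P \<Longrightarrow> a < length P \<Longrightarrow> block_rep P a \<in> P ! a"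
  unfolding block_rep_def block_partition_def by (meson ex_in_conv someI_ex)

lemma blocks_homogeneous_eq_block_rep:
  "block_partition K P \<Longrightarrow> blocks_homogeneous v P \<Longrightarrow> a < length P \<Longrightarrow> x \<in> P ! a \<Longrightarrow> v x = v (block_rep P a)"
  using block_rep_mem unfolding blocks_homogeneous_def by blast

lemma image_subset_block_rep_values:
  assumes P: "block_partition K P" and hom: "blocks_homogeneous v P"
  shows "v ` {..<K} \<subseteq> (\<lambda>a. v (block_rep P a)) ` {..<length P}"
proof
  fix y assume "y \<in> v ` {..<K}"
  then obtain k where k: "k < K" "y = v k" by auto
  obtain a where "a < length P" "k \<in> P ! a" using block_partition_covers[OF P k(1)] by blast
  then show "y \<in> (\<lambda>a. v (block_rep P a)) ` {..<length P}"
    using blocks_homogeneous_eq_block_rep[OF P hom] k by auto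
qed

lemma card_image_le_length_if_homogeneous:
  assumes "block_partition K P" and "blocks_homogeneous v P"
  shows "card (v ` {..<K}) \<le> length P"
proof -
  have "card (v ` {..<K}) \<le> card ((\<lambda>a. v (block_rep P a)) ` {..<length P})"
    by (intro card_mono image_subset_block_rep_values[OF assms]) auto
  also have "\<dots> \<le> length P" using card_image_le[of "{..<length P}"] by simp
  finally show ?thesis .
qed

(* Otherwise the block values would increase strictly along P, giving length P distinct values
   of v. *)
lemma ex_homogeneous_adjacent_merge:
  assumes P: "block_partition K P" and sorted: "blocks_sorted v P" and hom: "blocks_homogeneous v P"
    and more: "card (v ` {..<K}) < length P"
  shows "\<exists>b. Suc b < length P \<and> (\<forall>x\<in>P ! b \<union> P ! Suc b. \<forall>y\<in>P ! b \<union> P ! Suc b. v x = v y)"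
proof (rule ccontr)
  assume none: "\<not> ?thesis"
  let ?val = "\<lambda>a. v (block_rep P a)"
  have step: "?val a < ?val (Suc a)" if "Suc a < length P" for a
  proof -
    have "?val a \<le> ?val (Suc a)"
      using sorted block_rep_mem[OF P, of a] block_rep_mem[OF P, of "Suc a"] that
      unfolding blocks_sorted_def by auto
    moreover have "?val a \<noteq> ?val (Suc a)"
      using none that blocks_homogeneous_eq_block_rep[OF P hom, of a]
        blocks_homogeneous_eq_block_rep[OF P hom, of "Suc a"] by fastforce
    ultimately show ?thesis by simp
  qed
  have strict: "?val a < ?val c" if "a < c" "c < length P" for a c
    using that
  proof (induction c)
    case (Suc c)
    then show ?case using step[of c] by (cases "a = c") auto
  qed simp
  have "inj_on ?val {..<length P}"
    by (rule inj_onI) (metis lessThan_iff linorder_neqE_nat order_less_irrefl strict)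
  moreover have "?val ` {..<length P} \<subseteq> v ` {..<K}"
    using block_rep_mem[OF P] block_partition_nth_subset[OF P] by blast
  ultimately have "length P \<le> card (v ` {..<K})"
    using card_inj_on_le[of ?val "{..<length P}" "v ` {..<K}"] by simp
  then show False using more by simp
qed

lemma same_block_if_length_eq_card:
  assumes P: "block_partition K P" and hom: "blocks_homogeneous v P"
    and len: "length P = card (v ` {..<K})"
    and g: "g < K" and h: "h < K" and eq: "v g = v h"
  shows "block_of P g = block_of P h"
proof -
  obtain a where a: "a < length P" "g \<in> P ! a" using block_partition_covers[OF P g] by blast
  obtain b where b: "b < length P" "h \<in> P ! b" using block_partition_covers[OF P h] by blast
  let ?val = "\<lambda>a. v (block_rep P a)"
  have "a = b"
  proof (rule ccontr)
    assume ab: "a \<noteq> b"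
    have "?val a = ?val b"
      using blocks_homogeneous_eq_block_rep[OF P hom] a b eq by metis
    then have "?val ` {..<length P} = ?val ` ({..<length P} - {a})"
      using ab b by (auto simp: image_iff)
    then have "card (?val ` {..<length P}) \<le> length P - 1"
      using a card_image_le[of "{..<length P} - {a}" ?val] by simp
    moreover have "card (v ` {..<K}) \<le> card (?val ` {..<length P})"
      by (intro card_mono image_subset_block_rep_values[OF P hom]) auto
    ultimately show False using len a by linarith
  qed
  then show ?thesis using block_of_nth[OF P a] block_of_nth[OF P b] by simp
qed

(* n k stands for the pseudo-count N nu_hat_k, p for the MLE beta_hat_j and v for the true beta_j;
   the last two assumptions are where N has to be large compared with T = sqrt N * eta. *)
locale merge_selection =
  fixes K N :: nat and n p v :: "nat \<Rightarrow> real" and c \<eta> \<delta> a \<rho> :: real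
    and \<Gamma> :: "nat \<Rightarrow> nat \<Rightarrow> real" and Yd :: "nat \<Rightarrow> nat \<Rightarrow> bool" and j :: nat
  assumes K_pos: "1 \<le> K" and N_pos: "0 < N"
    and c_pos: "0 < c" and counts_ge: "\<forall>k<K. c * real N \<le> n k"
    and counts_sum: "(\<Sum>k<K. n k) = real N"
    and p_close: "\<forall>k<K. \<bar>p k - v k\<bar> \<le> \<eta>"
    and v_margin: "\<forall>k<K. a \<le> v k \<and> v k \<le> 1 - a"
    and a_pos: "0 < a"
    and eta_nonneg: "0 \<le> \<eta>" and eta_le_margin: "\<eta> \<le> a / 2" and eta_lt_gap: "4 * \<eta> < \<delta>"
    and v_gap: "\<forall>k<K. \<forall>l<K. v k \<noteq> v l \<longrightarrow> \<delta> \<le> \<bar>v k - v l\<bar>"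
    and Qj_eq: "\<forall>\<beta>. Qj N K \<Gamma> Yd j \<beta> = bern_loglik K n p \<beta>"
    and block_mean_eq: "\<forall>C. C \<subseteq> {..<K} \<longrightarrow> block_mean N \<Gamma> Yd j C = weighted_mean n p C"
    and rho_ge_1: "1 \<le> \<rho>"
    and penalty_large: "2 * (real N * 16 * \<eta>^2 / a) < ln (real N)"
    and penalty_small: "real K * (ln (real N) + 2 * ln \<rho>) < 2 * (c * real N * \<delta>^2 / 32 - real N * 16 * \<eta>^2 / a)"
begin

definition "pure_loss_bound = real N * 16 * \<eta>^2 / a"
definition "impure_loss_bound = c * real N * \<delta>^2 / 32"
definition "m_true = card (v ` {..<K})"
definition "pooled P k = weighted_mean n p (block_of P k)"
definition "pooling_loss P = bern_loglik K n p p - bern_loglik K n p (pooled P)"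

lemma counts_pos: "k < K \<Longrightarrow> 0 < n k"
  using counts_ge c_pos N_pos by (smt (verit) mult_pos_pos of_nat_0_less_iff)

lemma p_margin:
  assumes "k < K" shows "a / 2 \<le> p k \<and> p k \<le> 1 - a / 2"
  using p_close[rule_format, OF assms] v_margin[rule_format, OF assms] eta_le_margin by linarith

lemma p_in_01:
  assumes "k < K" shows "0 < p k \<and> p k < 1"
  using p_margin[OF assms] a_pos by linarith

lemma p_le_imp_v_le:
  assumes x: "x < K" and y: "y < K" and le: "p x \<le> p y"
  shows "v x \<le> v y"
proof (rule ccontr)
  assume gt: "\<not> v x \<le> v y"
  then have "v x \<noteq> v y" by auto
  then have "\<delta> \<le> \<bar>v x - v y\<bar>" using v_gap x y by blast
  then show False
    using p_close[rule_format, OF x] p_close[rule_format, OF y] le gt eta_lt_gap eta_nonneg by linarith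
qed

lemma block_partition_block_ofE:
  assumes P: "block_partition K P" and k: "k < K"
  obtains b where "b < length P" "k \<in> P ! b" "block_of P k = P ! b" "P ! b \<subseteq> {..<K}"
    "finite (P ! b)" "P ! b \<noteq> {}"
proof -
  obtain b where b: "b < length P" "k \<in> P ! b" using block_partition_covers[OF P k] by blast
  have sub: "P ! b \<subseteq> {..<K}" by (rule block_partition_nth_subset[OF P b(1)])
  then have "finite (P ! b)" using finite_subset by blast
  then show ?thesis using that b block_of_nth[OF P b] sub by blast
qed

lemma pooled_margin:
  assumes P: "block_partition K P" and k: "k < K"
  shows "a / 2 \<le> pooled P k \<and> pooled P k \<le> 1 - a / 2"
proof -
  obtain b where b: "b < length P" "k \<in> P ! b" "block_of P k = P ! b" "P ! b \<subseteq> {..<K}"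
    "finite (P ! b)" "P ! b \<noteq> {}" using block_partition_block_ofE[OF P k] by blast
  have "\<forall>x\<in>P ! b. 0 < n x \<and> a / 2 \<le> p x \<and> p x \<le> 1 - a / 2"
    using b(4) counts_pos p_margin by blast
  then show ?thesis unfolding pooled_def b(3) using weighted_mean_bounds[OF b(5,6)] by blast
qed

lemma pooled_in_01:
  assumes "block_partition K P" "k < K" shows "0 < pooled P k \<and> pooled P k < 1"
  using pooled_margin[OF assms] a_pos by linarith

lemma pooled_close:
  assumes P: "block_partition K P" and hom: "blocks_homogeneous v P" and k: "k < K"
  shows "\<bar>pooled P k - v k\<bar> \<le> \<eta>"
proof -
  obtain b where b: "b < length P" "k \<in> P ! b" "block_of P k = P ! b" "P ! b \<subseteq> {..<K}"
    "finite (P ! b)" "P ! b \<noteq> {}" using block_partition_block_ofE[OF P k] by blast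
  have "\<forall>x\<in>P ! b. 0 < n x \<and> v k - \<eta> \<le> p x \<and> p x \<le> v k + \<eta>"
  proof
    fix x assume x: "x \<in> P ! b"
    have "v x = v k" using hom b x unfolding blocks_homogeneous_def by blast
    moreover have "x < K" using x b(4) by auto
    ultimately show "0 < n x \<and> v k - \<eta> \<le> p x \<and> p x \<le> v k + \<eta>"
      using counts_pos p_close by fastforce
  qed
  then have "v k - \<eta> \<le> pooled P k \<and> pooled P k \<le> v k + \<eta>"
    unfolding pooled_def b(3) using weighted_mean_bounds[OF b(5,6)] by blast
  then show ?thesis by linarith
qed

lemma constr_sol_eq_pooled:
  assumes P: "block_partition K P" and k: "k < K"
  shows "constr_sol N \<Gamma> Yd j P k = pooled P k"
proof -
  obtain b where "b < length P" "k \<in> P ! b" "block_of P k = P ! b" "P ! b \<subseteq> {..<K}"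
    "finite (P ! b)" "P ! b \<noteq> {}" using block_partition_block_ofE[OF P k] by blast
  then show ?thesis unfolding constr_sol_def pooled_def using block_mean_eq by simp
qed

lemma Qj_constr_sol:
  assumes "block_partition K P"
  shows "Qj N K \<Gamma> Yd j (constr_sol N \<Gamma> Yd j P) = bern_loglik K n p (pooled P)"
proof -
  have "bern_loglik K n p (constr_sol N \<Gamma> Yd j P) = bern_loglik K n p (pooled P)"
    by (rule bern_loglik_cong) (rule constr_sol_eq_pooled[OF assms])
  then show ?thesis using Qj_eq by simp
qed

lemma pooling_loss_eq: "pooling_loss P = (\<Sum>k<K. n k * bern_kl (p k) (pooled P k))"
  unfolding pooling_loss_def by (rule bern_loglik_loss_eq_sum_kl)

lemma pooling_loss_nonneg:
  assumes "block_partition K P" shows "0 \<le> pooling_loss P"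
  unfolding pooling_loss_eq
  by (intro sum_nonneg mult_nonneg_nonneg)
    (use counts_pos p_in_01 pooled_in_01[OF assms] bern_kl_nonneg in \<open>auto simp: less_imp_le\<close>)

lemma pooling_loss_homogeneous_le:
  assumes P: "block_partition K P" and hom: "blocks_homogeneous v P"
  shows "pooling_loss P \<le> pure_loss_bound"
proof -
  have "n k * bern_kl (p k) (pooled P k) \<le> n k * (16 * \<eta>^2 / a)" if k: "k < K" for k
  proof -
    have "\<bar>p k - pooled P k\<bar> \<le> 2 * \<eta>" using pooled_close[OF P hom k] p_close k by fastforce
    then have "bern_kl (p k) (pooled P k) \<le> 4 * (2 * \<eta>)^2 / a"
      using bern_kl_le_of_margin p_in_01[OF k] a_pos pooled_margin[OF P k] by blast
    then show ?thesis using counts_pos[OF k] by (intro mult_left_mono) (auto simp: power_mult_distrib)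
  qed
  then have "pooling_loss P \<le> (\<Sum>k<K. n k * (16 * \<eta>^2 / a))"
    unfolding pooling_loss_eq by (intro sum_mono) auto
  also have "\<dots> = pure_loss_bound"
    unfolding pure_loss_bound_def sum_distrib_right[symmetric] counts_sum by simp
  finally show ?thesis .
qed

lemma pooling_loss_inhomogeneous_ge:
  assumes P: "block_partition K P" and inhom: "\<not> blocks_homogeneous v P"
  shows "impure_loss_bound \<le> pooling_loss P"
proof -
  obtain b x y where b: "b < length P" and x: "x \<in> P ! b" and y: "y \<in> P ! b" and vxy: "v x \<noteq> v y"
    using inhom unfolding blocks_homogeneous_def by blast
  have xK: "x < K" and yK: "y < K" using x y block_partition_nth_subset[OF P b] by auto
  let ?q = "weighted_mean n p (P ! b)"
  have xy: "x \<noteq> y" using vxy by auto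
  have px: "pooled P x = ?q" and py: "pooled P y = ?q"
    unfolding pooled_def using block_of_nth[OF P b x] block_of_nth[OF P b y] by simp_all
  have kl: "0 \<le> bern_kl (p k) (pooled P k)" if "k < K" for k
    using p_in_01[OF that] pooled_in_01[OF P that] bern_kl_nonneg by (simp add: less_imp_le)
  have "\<delta> / 2 \<le> \<bar>p x - p y\<bar>"
    using v_gap[rule_format, OF xK yK vxy] p_close[rule_format, OF xK] p_close[rule_format, OF yK]
      eta_lt_gap eta_nonneg by linarith
  then have "(\<delta> / 2)^2 \<le> (p x - p y)^2"
    using power_mono[of "\<delta> / 2" "\<bar>p x - p y\<bar>" 2] eta_lt_gap eta_nonneg by simp
  then have "(\<delta> / 2)^2 / 8 \<le> bern_kl (p x) ?q + bern_kl (p y) ?q"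
    using bern_kl_pair_ge[of "p x" "p y" ?q] p_in_01[OF xK] p_in_01[OF yK] pooled_in_01[OF P xK] px
    by simp
  then have "impure_loss_bound \<le> c * real N * (bern_kl (p x) ?q + bern_kl (p y) ?q)"
    unfolding impure_loss_bound_def using c_pos by (simp add: power_divide mult_left_mono)
  also have "\<dots> \<le> n x * bern_kl (p x) ?q + n y * bern_kl (p y) ?q"
    using counts_ge xK yK kl[OF xK] kl[OF yK] unfolding px py
    by (simp add: distrib_left mult_right_mono add_mono)
  also have "\<dots> = (\<Sum>k\<in>{x, y}. n k * bern_kl (p k) (pooled P k))"
    using xy px py by simp
  also have "\<dots> \<le> pooling_loss P"
    unfolding pooling_loss_eq using xK yK kl counts_pos
    by (intro sum_mono2) (auto intro: mult_nonneg_nonneg less_imp_le)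
  finally show ?thesis .
qed

lemma penalty_nonneg: "0 \<le> ln (real N) + 2 * ln \<rho>"
  using N_pos rho_ge_1 by (simp add: ln_ge_zero)

lemma pure_loss_bound_nonneg: "0 \<le> pure_loss_bound"
  unfolding pure_loss_bound_def using a_pos by simp

lemma pure_loss_bound_lt: "pure_loss_bound < impure_loss_bound"
proof -
  have "0 \<le> real K * (ln (real N) + 2 * ln \<rho>)" using penalty_nonneg by simp
  then have "0 < 2 * (impure_loss_bound - pure_loss_bound)"
    using penalty_small unfolding pure_loss_bound_def impure_loss_bound_def by (rule le_less_trans)
  then show ?thesis by simp
qed

lemma m_true_ge_1: "1 \<le> m_true"
  using K_pos unfolding m_true_def by (simp add: Suc_le_eq card_gt_0_iff lessThan_empty_iff)

lemma m_true_le: "m_true \<le> K"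
  unfolding m_true_def using card_image_le[OF finite_lessThan[of K], of v] by simp

definition "merged m = (merge_step N K \<Gamma> Yd j ^^ m) (init_part K p)"

lemma merged_Suc: "merged (Suc m) = merge_adj (merged m) (best_merge N K \<Gamma> Yd j (merged m))"
  unfolding merged_def by (simp add: merge_step_def)

lemma merged_structure:
  "m < K \<Longrightarrow> block_partition K (merged m) \<and> blocks_sorted v (merged m) \<and> length (merged m) = K - m"
proof (induction m)
  case 0
  show ?case
    unfolding merged_def using block_partition_init_part blocks_sorted_init_part length_init_part p_le_imp_v_le
    by simp
next
  case (Suc m)
  then have IH: "block_partition K (merged m)" "blocks_sorted v (merged m)" "length (merged m) = K - m"
    by auto
  moreover have "2 \<le> length (merged m)" using IH(3) Suc.prems by simp
  ultimately have "best_merge N K \<Gamma> Yd j (merged m) < length (merged m) - 1"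
    using best_merge_is_argmax by blast
  then have "Suc (best_merge N K \<Gamma> Yd j (merged m)) < length (merged m)" by simp
  then show ?case unfolding merged_Suc
    using IH block_partition_merge_adj blocks_sorted_merge_adj length_merge_adj by simp
qed

(* The greedy step keeps the blocks homogeneous as long as some adjacent homogeneous merge is
   available: that merge loses at most pure_loss_bound, any inhomogeneous one at least
   impure_loss_bound. *)
lemma merged_homogeneous: "m \<le> K - m_true \<Longrightarrow> blocks_homogeneous v (merged m)"
proof (induction m)
  case 0
  show ?case unfolding merged_def by (simp add: blocks_homogeneous_init_part)
next
  case (Suc m)
  let ?P = "merged m" and ?b = "best_merge N K \<Gamma> Yd j (merged m)"
  have m: "m < K" using Suc.prems m_true_ge_1 by simp
  have P: "block_partition K ?P" "blocks_sorted v ?P" "length ?P = K - m"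
    using merged_structure[OF m] by auto
  have hom: "blocks_homogeneous v ?P" using Suc by simp
  have best: "?b < length ?P - 1"
    "\<forall>b'<length ?P - 1. Qj N K \<Gamma> Yd j (constr_sol N \<Gamma> Yd j (merge_adj ?P b'))
        \<le> Qj N K \<Gamma> Yd j (constr_sol N \<Gamma> Yd j (merge_adj ?P ?b))"
    using best_merge_is_argmax[of ?P] P(3) Suc.prems m_true_ge_1 by auto
  have "m_true < length ?P" using Suc.prems P(3) by linarith
  then obtain b0 where b0: "Suc b0 < length ?P"
    "\<forall>x\<in>?P ! b0 \<union> ?P ! Suc b0. \<forall>y\<in>?P ! b0 \<union> ?P ! Suc b0. v x = v y"
    using ex_homogeneous_adjacent_merge[OF P(1,2) hom] unfolding m_true_def by blast
  have P0: "block_partition K (merge_adj ?P b0)" "blocks_homogeneous v (merge_adj ?P b0)"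
    using block_partition_merge_adj[OF P(1) b0(1)] blocks_homogeneous_merge_adj[OF hom b0] by auto
  have Pb: "block_partition K (merge_adj ?P ?b)" using block_partition_merge_adj[OF P(1)] best(1) by simp
  have "Qj N K \<Gamma> Yd j (constr_sol N \<Gamma> Yd j (merge_adj ?P b0))
      \<le> Qj N K \<Gamma> Yd j (constr_sol N \<Gamma> Yd j (merge_adj ?P ?b))"
    using best(2) b0(1) by simp
  then have "pooling_loss (merge_adj ?P ?b) \<le> pooling_loss (merge_adj ?P b0)"
    unfolding pooling_loss_def Qj_constr_sol[OF P0(1)] Qj_constr_sol[OF Pb] by simp
  also have "\<dots> \<le> pure_loss_bound" by (rule pooling_loss_homogeneous_le[OF P0])
  finally show ?case
    using pooling_loss_inhomogeneous_ge[OF Pb] pure_loss_bound_lt unfolding merged_Suc by fastforce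
qed

definition "level_loss m = bern_loglik K n p p - Qj N K \<Gamma> Yd j (candidate N K \<Gamma> Yd j p m)"

lemma candidate_lt: "m < K \<Longrightarrow> candidate N K \<Gamma> Yd j p m = constr_sol N \<Gamma> Yd j (merged (K - m))"
  unfolding candidate_def part_m_def merged_def by simp

lemma level_loss_lt:
  assumes "1 \<le> m" "m < K"
  shows "level_loss m = pooling_loss (merged (K - m))"
  using merged_structure[of "K - m"] assms Qj_constr_sol
  unfolding level_loss_def pooling_loss_def candidate_lt[OF assms(2)] by simp

lemma level_loss_upper:
  assumes "1 \<le> m" "m \<le> K" "m_true \<le> m"
  shows "0 \<le> level_loss m \<and> level_loss m \<le> pure_loss_bound"
proof (cases "m = K")
  case True
  then show ?thesis unfolding level_loss_def candidate_def using Qj_eq pure_loss_bound_nonneg by simp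
next
  case False
  then have "block_partition K (merged (K - m))" "blocks_homogeneous v (merged (K - m))"
    using merged_structure[of "K - m"] merged_homogeneous[of "K - m"] assms by auto
  then show ?thesis
    using level_loss_lt[of m] assms False pooling_loss_nonneg pooling_loss_homogeneous_le by simp
qed

lemma level_loss_lower:
  assumes "1 \<le> m" "m < m_true"
  shows "impure_loss_bound \<le> level_loss m"
proof -
  have m: "m < K" using assms m_true_le by simp
  have P: "block_partition K (merged (K - m))" "length (merged (K - m)) = m"
    using merged_structure[of "K - m"] assms m by auto
  then have "\<not> blocks_homogeneous v (merged (K - m))"
    using card_image_le_length_if_homogeneous[OF P(1)] assms unfolding m_true_def by fastforce
  then show ?thesis unfolding level_loss_lt[OF assms(1) m] by (rule pooling_loss_inhomogeneous_ge[OF P(1)])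
qed

lemma EBIC_eq:
  "EBIC N K \<Gamma> Yd j p \<rho> m = - 2 * bern_loglik K n p p + 2 * level_loss m + real m * (ln (real N) + 2 * ln \<rho>)"
  unfolding EBIC_def level_loss_def by (simp add: algebra_simps)

(* Overfitting saves at most pure_loss_bound but pays at least one penalty ln N + 2 ln rho;
   underfitting saves at most K penalties but loses at least impure_loss_bound. *)
lemma EBIC_m_true_less:
  assumes m: "1 \<le> m" "m \<le> K" "m \<noteq> m_true"
  shows "EBIC N K \<Gamma> Yd j p \<rho> m_true < EBIC N K \<Gamma> Yd j p \<rho> m"
proof -
  define pen where "pen = ln (real N) + 2 * ln \<rho>"
  have pen: "0 \<le> pen" unfolding pen_def by (rule penalty_nonneg)
  have at_true: "0 \<le> level_loss m_true" "level_loss m_true \<le> pure_loss_bound"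
    using level_loss_upper m_true_ge_1 m_true_le by simp_all
  define X where "X = (real m - real m_true) * pen"
  have diff: "EBIC N K \<Gamma> Yd j p \<rho> m - EBIC N K \<Gamma> Yd j p \<rho> m_true
      = 2 * (level_loss m - level_loss m_true) + X"
    unfolding EBIC_eq pen_def X_def by (simp add: algebra_simps)
  consider "m_true < m" | "m < m_true" using m(3) by linarith
  then show ?thesis
  proof cases
    case 1
    then have "pen \<le> X" unfolding X_def using pen mult_right_mono[of 1 _ pen] by simp
    moreover have "2 * pure_loss_bound < pen"
      using penalty_large rho_ge_1 unfolding pen_def pure_loss_bound_def by (smt (verit) ln_ge_zero)
    moreover have "0 \<le> level_loss m" using level_loss_upper[of m] m 1 by simp
    ultimately show ?thesis using diff at_true by smt
  next
    case 2
    then have "- (real K * pen) \<le> X"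
      unfolding X_def using pen m_true_le mult_right_mono[of "real m_true - real m" "real K" pen]
      by (simp add: algebra_simps)
    moreover have "real K * pen < 2 * (impure_loss_bound - pure_loss_bound)"
      using penalty_small unfolding pen_def impure_loss_bound_def pure_loss_bound_def by simp
    moreover have "impure_loss_bound \<le> level_loss m" using level_loss_lower[OF m(1) 2] .
    ultimately show ?thesis using diff at_true by smt
  qed
qed

lemma m_sel_eq_m_true: "m_sel N K \<Gamma> Yd j p \<rho> = m_true"
  unfolding m_sel_def
proof (rule Least_equality)
  show "1 \<le> m_true \<and> m_true \<le> K \<and>
      (\<forall>m'. 1 \<le> m' \<and> m' \<le> K \<longrightarrow> EBIC N K \<Gamma> Yd j p \<rho> m_true \<le> EBIC N K \<Gamma> Yd j p \<rho> m')"
    using m_true_ge_1 m_true_le EBIC_m_true_less by (metis order_refl less_imp_le)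
  fix m assume "1 \<le> m \<and> m \<le> K \<and>
      (\<forall>m'. 1 \<le> m' \<and> m' \<le> K \<longrightarrow> EBIC N K \<Gamma> Yd j p \<rho> m \<le> EBIC N K \<Gamma> Yd j p \<rho> m')"
  then show "m_true \<le> m"
    using EBIC_m_true_less[of m] m_true_ge_1 m_true_le by fastforce
qed

lemma candidate_m_true_eq:
  assumes g: "g < K" and h: "h < K" and e: "v g = v h"
  shows "candidate N K \<Gamma> Yd j p m_true g = candidate N K \<Gamma> Yd j p m_true h"
proof (cases "m_true = K")
  case True
  then have "inj_on v {..<K}" unfolding m_true_def by (simp add: inj_on_iff_eq_card)
  then show ?thesis using g h e by (auto dest: inj_onD)
next
  case False
  then have lt: "m_true < K" using m_true_le by simp
  then have "block_partition K (merged (K - m_true))" "blocks_homogeneous v (merged (K - m_true))"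
    "length (merged (K - m_true)) = m_true"
    using merged_structure[of "K - m_true"] merged_homogeneous[of "K - m_true"] m_true_ge_1 by auto
  then have "block_of (merged (K - m_true)) g = block_of (merged (K - m_true)) h"
    using same_block_if_length_eq_card g h e unfolding m_true_def by blast
  then show ?thesis unfolding candidate_lt[OF lt] constr_sol_def by simp
qed

lemma candidate_m_true_neq:
  assumes g: "g < K" and h: "h < K" and e: "v g \<noteq> v h"
  shows "candidate N K \<Gamma> Yd j p m_true g \<noteq> candidate N K \<Gamma> Yd j p m_true h"
proof (cases "m_true = K")
  case True
  have "p g \<noteq> p h"
    using v_gap[rule_format, OF g h e] p_close[rule_format, OF g] p_close[rule_format, OF h]
      eta_lt_gap eta_nonneg by linarith
  then show ?thesis using True unfolding candidate_def by simp
next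
  case False
  then have lt: "m_true < K" using m_true_le by simp
  then have P: "block_partition K (merged (K - m_true))" "blocks_homogeneous v (merged (K - m_true))"
    using merged_structure[of "K - m_true"] merged_homogeneous[of "K - m_true"] m_true_ge_1 by auto
  have "pooled (merged (K - m_true)) g \<noteq> pooled (merged (K - m_true)) h"
    using pooled_close[OF P g] pooled_close[OF P h] v_gap[rule_format, OF g h e] eta_lt_gap eta_nonneg
    by linarith
  then show ?thesis unfolding candidate_lt[OF lt] using constr_sol_eq_pooled[OF P(1)] g h by simp
qed

end

definition refinement_correct :: "nat \<Rightarrow> nat \<Rightarrow> nat \<Rightarrow> real \<Rightarrow> (nat \<Rightarrow> real) \<Rightarrow> (nat \<Rightarrow> nat \<Rightarrow> real)
    \<Rightarrow> (nat \<Rightarrow> nat \<Rightarrow> bool) \<Rightarrow> (nat \<Rightarrow> real) \<Rightarrow> nat \<Rightarrow> bool" where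
  "refinement_correct N J K \<rho> \<nu>h Bh Yd \<beta> j \<longleftrightarrow>
     m_tilde N J K \<rho> \<nu>h Bh Yd j = card (\<beta> ` {..<K}) \<and>
     (\<forall>g<K. \<forall>h<K. \<beta> g = \<beta> h \<longrightarrow> beta_tilde N J K \<rho> \<nu>h Bh Yd j g = beta_tilde N J K \<rho> \<nu>h Bh Yd j h) \<and>
     (\<forall>g<K. \<forall>h<K. \<beta> g \<noteq> \<beta> h \<longrightarrow> beta_tilde N J K \<rho> \<nu>h Bh Yd j g \<noteq> beta_tilde N J K \<rho> \<nu>h Bh Yd j h)"

lemma refinement_correct_if_merge_selection:
  assumes "merge_selection K N n (Bh j) \<beta> c \<eta> \<delta> a \<rho> (post_weight J K \<nu>h Bh Yd) Yd j"
  shows "refinement_correct N J K \<rho> \<nu>h Bh Yd \<beta> j"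
proof -
  interpret merge_selection K N n "Bh j" \<beta> c \<eta> \<delta> a \<rho> "post_weight J K \<nu>h Bh Yd" Yd j by fact
  have m: "m_tilde N J K \<rho> \<nu>h Bh Yd j = m_true"
    unfolding m_tilde_def by (rule m_sel_eq_m_true)
  have \<beta>: "beta_tilde N J K \<rho> \<nu>h Bh Yd j = candidate N K (post_weight J K \<nu>h Bh Yd) Yd j (Bh j) m_true"
    unfolding beta_tilde_def m ..
  show ?thesis unfolding refinement_correct_def m \<beta> m_true_def[symmetric]
    by (intro conjI allI impI refl candidate_m_true_eq candidate_m_true_neq)
qed

lemma finite_pos_lower_bound:
  fixes f :: "'a \<Rightarrow> real"
  assumes "finite A" "\<forall>x\<in>A. 0 < f x"
  shows "\<exists>c>0. \<forall>x\<in>A. c \<le> f x"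
proof (cases "A = {}")
  case False
  then show ?thesis using assms by (intro exI[of _ "Min (f ` A)"]) auto
next
  case True
  then show ?thesis by (intro exI[of _ 1]) simp
qed

lemma true_param_margins:
  fixes \<nu> \<beta> :: "nat \<Rightarrow> real"
  assumes \<nu>: "\<forall>k<K. 0 < \<nu> k" and \<beta>: "\<forall>k<K. 0 < \<beta> k \<and> \<beta> k < 1"
  obtains c a \<delta> where "0 < c" "\<forall>k<K. c \<le> \<nu> k" "0 < a" "\<forall>k<K. a \<le> \<beta> k \<and> \<beta> k \<le> 1 - a"
    "0 < \<delta>" "\<forall>k<K. \<forall>l<K. \<beta> k \<noteq> \<beta> l \<longrightarrow> \<delta> \<le> \<bar>\<beta> k - \<beta> l\<bar>"
proof -
  obtain c where c: "0 < c" "\<forall>k<K. c \<le> \<nu> k"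
    using finite_pos_lower_bound[of "{..<K}" \<nu>] \<nu> by auto
  obtain a where a: "0 < a" "\<forall>k<K. a \<le> min (\<beta> k) (1 - \<beta> k)"
    using finite_pos_lower_bound[of "{..<K}" "\<lambda>k. min (\<beta> k) (1 - \<beta> k)"] \<beta> by auto
  define D where "D = {(k, l). k < K \<and> l < K \<and> \<beta> k \<noteq> \<beta> l}"
  have "finite D" unfolding D_def by (rule finite_subset[of _ "{..<K} \<times> {..<K}"]) auto
  then obtain \<delta> where \<delta>: "0 < \<delta>" "\<forall>(k, l)\<in>D. \<delta> \<le> \<bar>\<beta> k - \<beta> l\<bar>"
    using finite_pos_lower_bound[of D "\<lambda>(k, l). \<bar>\<beta> k - \<beta> l\<bar>"] unfolding D_def by auto
  have "\<forall>k<K. a \<le> \<beta> k \<and> \<beta> k \<le> 1 - a" using a(2) by auto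
  moreover have "\<forall>k<K. \<forall>l<K. \<beta> k \<noteq> \<beta> l \<longrightarrow> \<delta> \<le> \<bar>\<beta> k - \<beta> l\<bar>" using \<delta>(2) unfolding D_def by auto
  ultimately show ?thesis using that c a(1) \<delta>(1) by blast
qed

lemma refinement_correct_if_MLE_close:
  fixes \<nu>s \<nu>h :: "nat \<Rightarrow> real" and Bs Bh :: "nat \<Rightarrow> nat \<Rightarrow> real" and Yd :: "nat \<Rightarrow> nat \<Rightarrow> bool"
  assumes K: "1 \<le> K" and N: "0 < N" and j: "j < J" and rho: "1 \<le> \<rho>"
    and true_params: "param_space J K \<nu>s Bs" "\<forall>k<K. 0 < \<nu>s k" "\<forall>j<J. \<forall>k<K. 0 < Bs j k \<and> Bs j k < 1"
    and mle: "is_MLE N J K \<nu>h Bh Yd"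
    and nu_close: "\<forall>k<K. \<bar>\<nu>h k - \<nu>s k\<bar> \<le> \<eta>" and B_close: "\<forall>k<K. \<bar>Bh j k - Bs j k\<bar> \<le> \<eta>"
    and c: "0 < c" "\<forall>k<K. c \<le> \<nu>s k"
    and a: "0 < a" "\<forall>k<K. a \<le> Bs j k \<and> Bs j k \<le> 1 - a"
    and \<delta>: "\<forall>k<K. \<forall>l<K. Bs j k \<noteq> Bs j l \<longrightarrow> \<delta> \<le> \<bar>Bs j k - Bs j l\<bar>"
    and \<eta>: "0 \<le> \<eta>" "\<eta> \<le> c / 2" "\<eta> \<le> a / 2" "4 * \<eta> < \<delta>"
    and large_N: "2 * (real N * 16 * \<eta>^2 / a) < ln (real N)"
      "real K * (ln (real N) + 2 * ln \<rho>) < 2 * (c / 2 * real N * \<delta>^2 / 32 - real N * 16 * \<eta>^2 / a)"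
  shows "refinement_correct N J K \<rho> \<nu>h Bh Yd (Bs j) j"
proof -
  define \<Gamma> where "\<Gamma> = post_weight J K \<nu>h Bh Yd"
  have "\<forall>i<N. resp_lik J K \<nu>s Bs (Yd i) > 0"
    using true_params(2,3) K unfolding resp_lik_def
    by (auto intro!: sum_pos mult_pos_pos prod_pos simp: cprob_def lessThan_empty_iff)
  then have R: "\<forall>i<N. resp_lik J K \<nu>h Bh (Yd i) > 0"
    using is_MLE_resp_lik_pos[OF mle true_params(1)] by blast
  have nu_ge: "\<forall>k<K. c / 2 \<le> \<nu>h k"
  proof (intro allI impI)
    fix k assume "k < K"
    then have "\<bar>\<nu>h k - \<nu>s k\<bar> \<le> \<eta>" "c \<le> \<nu>s k" using nu_close c(2) by auto
    then show "c / 2 \<le> \<nu>h k" using \<eta>(2) by linarith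
  qed
  then have counts: "\<forall>k<K. (\<Sum>i<N. \<Gamma> i k) = real N * \<nu>h k"
    using is_MLE_class_score_eq[OF mle K _ R] c(1) unfolding \<Gamma>_def
    by (metis half_gt_zero order_less_le_trans)
  have score: "\<forall>k<K. (\<Sum>i<N. \<Gamma> i k * (if Yd i j then 1 else 0)) = Bh j k * (\<Sum>i<N. \<Gamma> i k)"
  proof (intro allI impI)
    fix k assume k: "k < K"
    then have "\<bar>Bh j k - Bs j k\<bar> \<le> \<eta>" "a \<le> Bs j k" "Bs j k \<le> 1 - a" using B_close a(2) by auto
    then have "0 < Bh j k" "Bh j k < 1" using a(1) \<eta>(3) by linarith+
    then show "(\<Sum>i<N. \<Gamma> i k * (if Yd i j then 1 else 0)) = Bh j k * (\<Sum>i<N. \<Gamma> i k)"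
      using is_MLE_item_score_eq[OF mle j k _ _ R] unfolding \<Gamma>_def by blast
  qed
  have "merge_selection K N (\<lambda>k. \<Sum>i<N. \<Gamma> i k) (Bh j) (Bs j) (c / 2) \<eta> \<delta> a \<rho> \<Gamma> Yd j"
  proof
    show "\<forall>k<K. c / 2 * real N \<le> (\<Sum>i<N. \<Gamma> i k)"
    proof (intro allI impI)
      fix k assume "k < K"
      then have "c / 2 * real N \<le> \<nu>h k * real N" using nu_ge by (intro mult_right_mono) auto
      then show "c / 2 * real N \<le> (\<Sum>i<N. \<Gamma> i k)" using counts \<open>k < K\<close> by (simp add: mult.commute)
    qed
    show "(\<Sum>k<K. \<Sum>i<N. \<Gamma> i k) = real N"
      using counts mle unfolding is_MLE_def param_space_def by (simp add: sum_distrib_left[symmetric])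
    show "\<forall>\<beta>. Qj N K \<Gamma> Yd j \<beta> = bern_loglik K (\<lambda>k. \<Sum>i<N. \<Gamma> i k) (Bh j) \<beta>"
      using Qj_eq_bern_loglik[where N=N and K=K and \<Gamma>=\<Gamma> and Yd=Yd and j=j and p="Bh j", OF score] by blast
    show "\<forall>C. C \<subseteq> {..<K} \<longrightarrow> block_mean N \<Gamma> Yd j C = weighted_mean (\<lambda>k. \<Sum>i<N. \<Gamma> i k) (Bh j) C"
      using block_mean_eq_weighted_mean[where N=N and K=K and \<Gamma>=\<Gamma> and Yd=Yd and j=j and p="Bh j", OF score] by blast
  qed (use K N c(1) a \<delta> \<eta> B_close rho large_N in simp_all)
  then show ?thesis unfolding \<Gamma>_def by (rule refinement_correct_if_merge_selection)
qed

lemma eventually_sample_size_conditions: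
  fixes T c a \<delta> \<rho> :: real and K :: nat
  assumes "0 < T" "0 < c" "0 < a" "0 < \<delta>"
  shows "eventually (\<lambda>N. 0 < N \<and> T / sqrt (real N) \<le> c / 2 \<and> T / sqrt (real N) \<le> a / 2
     \<and> 4 * (T / sqrt (real N)) < \<delta> \<and> 32 * T^2 / a < ln (real N)
     \<and> real K * (ln (real N) + 2 * ln \<rho>) < 2 * (c / 2 * real N * \<delta>^2 / 32 - 16 * T^2 / a)) sequentially"
proof -
  have real: "eventually (\<lambda>N. P (real N)) sequentially" if "eventually P (at_top :: real filter)" for P
    using filterlim_real_sequentially that unfolding filterlim_iff by blast
  have e1: "eventually (\<lambda>x::real. T / sqrt x \<le> c / 2) at_top"
    and e2: "eventually (\<lambda>x::real. T / sqrt x \<le> a / 2) at_top"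
    and e3: "eventually (\<lambda>x::real. 4 * (T / sqrt x) < \<delta>) at_top"
    and e4: "eventually (\<lambda>x::real. 32 * T^2 / a < ln x) at_top"
    and e5: "eventually (\<lambda>x::real. real K * (ln x + 2 * ln \<rho>) < 2 * (c / 2 * x * \<delta>^2 / 32 - 16 * T^2 / a)) at_top"
    using assms by real_asymp+
  show ?thesis
    using eventually_gt_at_top[of 0] real[OF e1] real[OF e2] real[OF e3] real[OF e4] real[OF e5]
    by eventually_elim blast
qed

lemma abs_le_if_root_N_bound:
  fixes x S T :: real
  assumes "sqrt (real N) * sqrt S \<le> T" "0 < N" "x^2 \<le> S"
  shows "\<bar>x\<bar> \<le> T / sqrt (real N)"
proof -
  have "\<bar>x\<bar> = sqrt (x^2)" by simp
  also have "\<dots> \<le> sqrt S" using assms(3) by (rule real_sqrt_le_mono)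
  also have "\<dots> \<le> T / sqrt (real N)" using assms(1,2) by (simp add: pos_le_divide_eq mult.commute)
  finally show ?thesis .
qed

lemma sq_le_double_sum:
  fixes f :: "nat \<Rightarrow> nat \<Rightarrow> real"
  assumes "j < J" "k < K"
  shows "(f j k)^2 \<le> (\<Sum>j<J. \<Sum>k<K. (f j k)^2)"
proof -
  have "(f j k)^2 \<le> (\<Sum>k<K. (f j k)^2)" using assms(2) by (intro member_le_sum) auto
  also have "\<dots> \<le> (\<Sum>j<J. \<Sum>k<K. (f j k)^2)"
    using assms(1) by (intro member_le_sum[where f="\<lambda>j. \<Sum>k<K. (f j k)^2"] sum_nonneg) auto
  finally show ?thesis .
qed

lemma eventually_refinement_correct:
  fixes \<nu>s :: "nat \<Rightarrow> real" and Bs :: "nat \<Rightarrow> nat \<Rightarrow> real"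
    and \<nu>h :: "nat \<Rightarrow> 'a \<Rightarrow> nat \<Rightarrow> real" and Bh :: "nat \<Rightarrow> 'a \<Rightarrow> nat \<Rightarrow> nat \<Rightarrow> real"
    and Yd :: "'a \<Rightarrow> nat \<Rightarrow> nat \<Rightarrow> bool"
  assumes K: "1 \<le> K" and nu_sum: "(\<Sum>k<K. \<nu>s k) = 1"
    and \<nu>s: "\<forall>k<K. 0 < \<nu>s k" and Bs: "\<forall>j<J. \<forall>k<K. 0 < Bs j k \<and> Bs j k < 1"
    and j: "j < J" and rho: "1 \<le> \<rho>"
    and mle: "\<And>N \<omega>. \<omega> \<in> \<Omega> \<Longrightarrow> is_MLE N J K (\<nu>h N \<omega>) (Bh N \<omega>) (Yd \<omega>)" and T: "0 < T"
  shows "eventually (\<lambda>N. \<forall>\<omega>\<in>\<Omega>. sqrt (real N) * sqrt (\<Sum>k<K. (\<nu>h N \<omega> k - \<nu>s k)\<^sup>2) \<le> T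
      \<and> sqrt (real N) * sqrt (\<Sum>j<J. \<Sum>k<K. (Bh N \<omega> j k - Bs j k)\<^sup>2) \<le> T
      \<longrightarrow> refinement_correct N J K \<rho> (\<nu>h N \<omega>) (Bh N \<omega>) (Yd \<omega>) (Bs j) j) sequentially"
proof -
  have true_params: "param_space J K \<nu>s Bs"
    unfolding param_space_def using \<nu>s Bs nu_sum by (auto simp: less_imp_le)
  obtain c a \<delta> where c: "0 < c" "\<forall>k<K. c \<le> \<nu>s k" and a: "0 < a" "\<forall>k<K. a \<le> Bs j k \<and> Bs j k \<le> 1 - a"
    and \<delta>: "0 < \<delta>" "\<forall>k<K. \<forall>l<K. Bs j k \<noteq> Bs j l \<longrightarrow> \<delta> \<le> \<bar>Bs j k - Bs j l\<bar>"
    using true_param_margins[of K \<nu>s "Bs j"] \<nu>s Bs j by auto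
  show ?thesis
    using eventually_sample_size_conditions[OF T c(1) a(1) \<delta>(1), of K \<rho>]
  proof eventually_elim
    case (elim N)
    have N: "0 < N" using elim by simp
    have \<eta>: "0 \<le> T / sqrt (real N)" "T / sqrt (real N) \<le> c / 2" "T / sqrt (real N) \<le> a / 2"
      "4 * (T / sqrt (real N)) < \<delta>"
      using elim T by auto
    have "real N * 16 * (T / sqrt (real N))^2 / a = 16 * T^2 / a" using N by (simp add: power_divide)
    then have large_N: "2 * (real N * 16 * (T / sqrt (real N))^2 / a) < ln (real N)"
      "real K * (ln (real N) + 2 * ln \<rho>)
        < 2 * (c / 2 * real N * \<delta>^2 / 32 - real N * 16 * (T / sqrt (real N))^2 / a)"
      using elim by auto
    show ?case
    proof (intro ballI impI, elim conjE)
      fix \<omega> assume \<omega>: "\<omega> \<in> \<Omega>"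
        and bound_nu: "sqrt (real N) * sqrt (\<Sum>k<K. (\<nu>h N \<omega> k - \<nu>s k)\<^sup>2) \<le> T"
        and bound_B: "sqrt (real N) * sqrt (\<Sum>j<J. \<Sum>k<K. (Bh N \<omega> j k - Bs j k)\<^sup>2) \<le> T"
      have "\<forall>k<K. \<bar>\<nu>h N \<omega> k - \<nu>s k\<bar> \<le> T / sqrt (real N)"
        by (intro allI impI abs_le_if_root_N_bound[OF bound_nu N] member_le_sum) auto
      moreover have "\<forall>k<K. \<bar>Bh N \<omega> j k - Bs j k\<bar> \<le> T / sqrt (real N)"
        using j by (intro allI impI abs_le_if_root_N_bound[OF bound_B N] sq_le_double_sum)
      ultimately show "refinement_correct N J K \<rho> (\<nu>h N \<omega>) (Bh N \<omega>) (Yd \<omega>) (Bs j) j"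
        using refinement_correct_if_MLE_close[OF K N j rho true_params \<nu>s Bs mle[OF \<omega>] _ _ c a \<delta>(2) \<eta> large_N]
        by blast
    qed
  qed
qed

(* All partitions reachable in m merges from singleton lists; countability of this set is what
   makes the data-dependent merge path measurable. *)
primrec merge_reachable :: "nat \<Rightarrow> nat set list set" where
  "merge_reachable 0 = range (\<lambda>xs::nat list. map (\<lambda>k. {k}) xs)"
| "merge_reachable (Suc m) = (\<lambda>(P, b). merge_adj P b) ` (merge_reachable m \<times> UNIV)"

lemma countable_merge_reachable: "countable (merge_reachable m)"
  by (induction m) auto

lemma measurable_count_space_if_countable_range:
  assumes f: "f \<in> measurable M (count_space UNIV)" and I: "\<forall>x\<in>space M. f x \<in> I" and c: "countable I"
  shows "f \<in> measurable M (count_space I)"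
  unfolding measurable_count_space_eq_countable[OF c]
  using I measurable_sets[OF f, of "{_}"] by auto

lemma measurable_insort_key:
  fixes f :: "'a \<Rightarrow> nat \<Rightarrow> real"
  assumes f: "\<And>k. (\<lambda>\<omega>. f \<omega> k) \<in> borel_measurable M"
  shows "(\<lambda>\<omega>. insort_key (f \<omega>) x ys) \<in> measurable M (count_space UNIV)"
proof (induction ys)
  case (Cons y ys)
  have "(\<lambda>\<omega>. y # insort_key (f \<omega>) x ys) \<in> measurable M (count_space UNIV)"
    by (rule measurable_compose[OF Cons.IH measurable_count_space])
  moreover have "{\<omega> \<in> space M. f \<omega> x \<le> f \<omega> y} \<in> sets M"
    using f by measurable
  ultimately show ?case by (simp only: insort_key.simps) (rule measurable_If, simp_all)
qed simp

lemma measurable_sort_key: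
  fixes f :: "'a \<Rightarrow> nat \<Rightarrow> real"
  assumes f: "\<And>k. (\<lambda>\<omega>. f \<omega> k) \<in> borel_measurable M"
  shows "(\<lambda>\<omega>. sort_key (f \<omega>) xs) \<in> measurable M (count_space UNIV)"
proof (induction xs)
  case (Cons x xs)
  have "(\<lambda>\<omega>. insort_key (f \<omega>) x (sort_key (f \<omega>) xs)) \<in> measurable M (count_space UNIV)"
    by (rule measurable_compose_countable[where f="\<lambda>l \<omega>. insort_key (f \<omega>) x l",
          OF measurable_insort_key[OF f] Cons.IH])
  then show ?case by simp
qed simp

locale refinement_measurability =
  fixes M :: "'a measure" and J j :: nat and \<nu>w :: "'a \<Rightarrow> nat \<Rightarrow> real"
    and Bw :: "'a \<Rightarrow> nat \<Rightarrow> nat \<Rightarrow> real" and Y :: "nat \<Rightarrow> nat \<Rightarrow> 'a \<Rightarrow> bool"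
  assumes measurable_\<nu>w: "\<And>k. (\<lambda>\<omega>. \<nu>w \<omega> k) \<in> borel_measurable M"
    and measurable_Bw: "\<And>j' k. (\<lambda>\<omega>. Bw \<omega> j' k) \<in> borel_measurable M"
    and measurable_Y: "\<And>i j'. j' < J \<Longrightarrow> Measurable.pred M (\<lambda>\<omega>. Y i j' \<omega>)"
    and j: "j < J"
begin

definition "\<Gamma> K \<omega> = post_weight J K (\<nu>w \<omega>) (Bw \<omega>) (\<lambda>i j'. Y i j' \<omega>)"

abbreviation "Yw \<omega> \<equiv> \<lambda>i j'. Y i j' \<omega>"

lemma measurable_cprob: "j' < J \<Longrightarrow> (\<lambda>\<omega>. cprob (Bw \<omega> j' k) (Y i j' \<omega>)) \<in> borel_measurable M"
  unfolding cprob_def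
  by (rule measurable_If) (use measurable_Bw measurable_Y in \<open>auto simp: pred_def\<close>)

lemma measurable_resp_lik: "(\<lambda>\<omega>. resp_lik J K (\<nu>w \<omega>) (Bw \<omega>) (\<lambda>j'. Y i j' \<omega>)) \<in> borel_measurable M"
  unfolding resp_lik_def
  by (intro borel_measurable_sum borel_measurable_times borel_measurable_prod measurable_\<nu>w measurable_cprob)
    auto

lemma measurable_\<Gamma>: "(\<lambda>\<omega>. \<Gamma> K \<omega> i k) \<in> borel_measurable M"
  unfolding \<Gamma>_def post_weight_def
  by (intro borel_measurable_divide borel_measurable_times borel_measurable_prod measurable_\<nu>w
      measurable_cprob measurable_resp_lik) auto

lemma measurable_Qj:
  assumes "\<And>k. k < K \<Longrightarrow> (\<lambda>\<omega>. \<beta> \<omega> k) \<in> borel_measurable M"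
  shows "(\<lambda>\<omega>. Qj N K (\<Gamma> K \<omega>) (Yw \<omega>) j (\<beta> \<omega>)) \<in> borel_measurable M"
  unfolding Qj_def
proof (intro borel_measurable_sum borel_measurable_times measurable_\<Gamma>)
  fix i k assume "k \<in> {..<K}"
  then show "(\<lambda>\<omega>. if Y i j \<omega> then ln (\<beta> \<omega> k) else ln (1 - \<beta> \<omega> k)) \<in> borel_measurable M"
    by (intro measurable_If) (use assms measurable_Y[OF j] in \<open>auto simp: pred_def\<close>)
qed

lemma measurable_constr_sol: "(\<lambda>\<omega>. constr_sol N (\<Gamma> K \<omega>) (Yw \<omega>) j P k) \<in> borel_measurable M"
  unfolding constr_sol_def block_mean_def
proof (intro borel_measurable_divide borel_measurable_sum borel_measurable_times measurable_\<Gamma>)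
  show "(\<lambda>\<omega>. if Y i j \<omega> then 1 else 0 :: real) \<in> borel_measurable M" for i
    by (rule measurable_If) (use measurable_Y[OF j] in \<open>auto simp: pred_def\<close>)
qed

lemma measurable_Qj_constr_sol[measurable]:
  "(\<lambda>\<omega>. Qj N K (\<Gamma> K \<omega>) (Yw \<omega>) j (constr_sol N (\<Gamma> K \<omega>) (Yw \<omega>) j P)) \<in> borel_measurable M"
  by (rule measurable_Qj) (rule measurable_constr_sol)

lemma measurable_best_merge:
  "(\<lambda>\<omega>. best_merge N K (\<Gamma> K \<omega>) (Yw \<omega>) j P) \<in> measurable M (count_space UNIV)"
  unfolding best_merge_def by measurable

definition "merge_path N K m \<omega> = (merge_step N K (\<Gamma> K \<omega>) (Yw \<omega>) j ^^ m) (init_part K (Bw \<omega> j))"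

lemma measurable_merge_path:
  "merge_path N K m \<in> measurable M (count_space (merge_reachable m))"
proof (induction m)
  case 0
  have path: "merge_path N K 0 = (\<lambda>\<omega>. map (\<lambda>k. {k}) (sort_key (Bw \<omega> j) [0..<K]))"
    unfolding merge_path_def init_part_def by simp
  have "(\<lambda>\<omega>. map (\<lambda>k. {k}) (sort_key (Bw \<omega> j) [0..<K])) \<in> measurable M (count_space UNIV)"
    by (rule measurable_compose[OF measurable_sort_key[OF measurable_Bw] measurable_count_space])
  then show ?case unfolding path
    by (rule measurable_count_space_if_countable_range[OF _ _ countable_merge_reachable]) simp
next
  case (Suc m)
  let ?best = "\<lambda>\<omega>. best_merge N K (\<Gamma> K \<omega>) (Yw \<omega>) j (merge_path N K m \<omega>)"
  have path: "merge_path N K (Suc m) = (\<lambda>\<omega>. merge_adj (merge_path N K m \<omega>) (?best \<omega>))"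
    unfolding merge_path_def by (simp add: merge_step_def)
  have "(\<lambda>\<omega>. merge_adj P (best_merge N K (\<Gamma> K \<omega>) (Yw \<omega>) j P)) \<in> measurable M (count_space UNIV)" for P
    by (rule measurable_compose[OF measurable_best_merge measurable_count_space])
  then have meas: "merge_path N K (Suc m) \<in> measurable M (count_space UNIV)"
    unfolding path by (rule measurable_compose_countable'[OF _ Suc.IH countable_merge_reachable])
  have "merge_path N K (Suc m) \<omega> \<in> merge_reachable (Suc m)" if "\<omega> \<in> space M" for \<omega>
  proof -
    have "merge_path N K m \<omega> \<in> merge_reachable m" using measurable_space[OF Suc.IH that] by simp
    then show ?thesis unfolding path merge_reachable.simps
      by (intro image_eqI[where x="(merge_path N K m \<omega>, ?best \<omega>)"]) simp_all
  qed
  then show ?case by (intro measurable_count_space_if_countable_range[OF meas _ countable_merge_reachable]) blast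
qed

lemma measurable_candidate:
  "(\<lambda>\<omega>. candidate N K (\<Gamma> K \<omega>) (Yw \<omega>) j (Bw \<omega> j) m k) \<in> borel_measurable M"
proof (cases "m = K")
  case True
  then show ?thesis unfolding candidate_def using measurable_Bw by simp
next
  case False
  have "(\<lambda>\<omega>. constr_sol N (\<Gamma> K \<omega>) (Yw \<omega>) j (merge_path N K (K - m) \<omega>) k) \<in> borel_measurable M"
    by (rule measurable_compose_countable'[OF measurable_constr_sol measurable_merge_path countable_merge_reachable])
  then show ?thesis using False unfolding candidate_def part_m_def merge_path_def by simp
qed

lemma measurable_EBIC[measurable]:
  "(\<lambda>\<omega>. EBIC N K (\<Gamma> K \<omega>) (Yw \<omega>) j (Bw \<omega> j) \<rho> m) \<in> borel_measurable M"
  unfolding EBIC_def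
  by (intro borel_measurable_add borel_measurable_times measurable_Qj measurable_candidate) auto

lemma measurable_m_tilde:
  "(\<lambda>\<omega>. m_tilde N J K \<rho> (\<nu>w \<omega>) (Bw \<omega>) (Yw \<omega>) j) \<in> measurable M (count_space UNIV)"
  unfolding m_tilde_def m_sel_def \<Gamma>_def[symmetric] by measurable

lemma borel_measurable_beta_tilde:
  "(\<lambda>\<omega>. beta_tilde N J K \<rho> (\<nu>w \<omega>) (Bw \<omega>) (Yw \<omega>) j g) \<in> borel_measurable M"
proof -
  have "(\<lambda>\<omega>. candidate N K (\<Gamma> K \<omega>) (Yw \<omega>) j (Bw \<omega> j) (m_tilde N J K \<rho> (\<nu>w \<omega>) (Bw \<omega>) (Yw \<omega>) j) g)
      \<in> borel_measurable M"
    by (rule measurable_compose_countable[where f="\<lambda>m \<omega>. candidate N K (\<Gamma> K \<omega>) (Yw \<omega>) j (Bw \<omega> j) m g",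
          OF measurable_candidate measurable_m_tilde])
  then show ?thesis unfolding beta_tilde_def \<Gamma>_def .
qed

lemma sets_m_tilde_eq: "{\<omega> \<in> space M. m_tilde N J K \<rho> (\<nu>w \<omega>) (Bw \<omega>) (Yw \<omega>) j = c} \<in> sets M"
  using measurable_m_tilde by measurable

lemma sets_beta_tilde_eq:
  "{\<omega> \<in> space M. beta_tilde N J K \<rho> (\<nu>w \<omega>) (Bw \<omega>) (Yw \<omega>) j g
     = beta_tilde N J K \<rho> (\<nu>w \<omega>) (Bw \<omega>) (Yw \<omega>) j h} \<in> sets M"
  using borel_measurable_beta_tilde by measurable

lemma sets_beta_tilde_neq:
  "{\<omega> \<in> space M. beta_tilde N J K \<rho> (\<nu>w \<omega>) (Bw \<omega>) (Yw \<omega>) j g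
     \<noteq> beta_tilde N J K \<rho> (\<nu>w \<omega>) (Bw \<omega>) (Yw \<omega>) j h} \<in> sets M"
  using borel_measurable_beta_tilde by measurable

end


lemma measurable_response_of_indep_vars:
  fixes M :: "'a measure" and Y :: "nat \<Rightarrow> nat \<Rightarrow> 'a \<Rightarrow> bool" and \<xi> :: "nat \<Rightarrow> 'a \<Rightarrow> nat"
  assumes P: "prob_space M"
    and indep: "prob_space.indep_vars M (\<lambda>_. count_space UNIV) (\<lambda>i \<omega>. (\<xi> i \<omega>, restrict (\<lambda>j. Y i j \<omega>) {..<J})) UNIV"
    and j: "j < J"
  shows "Measurable.pred M (\<lambda>\<omega>. Y i j \<omega>)"
proof -
  have "(\<lambda>\<omega>. (\<xi> i \<omega>, restrict (\<lambda>j. Y i j \<omega>) {..<J})) \<in> measurable M (count_space UNIV)"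
    using indep unfolding prob_space.indep_vars_def[OF P] by auto
  then have "(\<lambda>\<omega>. snd (\<xi> i \<omega>, restrict (\<lambda>j. Y i j \<omega>) {..<J}) j) \<in> measurable M (count_space UNIV)"
    by (rule measurable_compose[OF _ measurable_count_space])
  then show ?thesis using j by simp
qed

lemma bounded_in_prob_joint:
  fixes X1 X2 :: "nat \<Rightarrow> 'a \<Rightarrow> real"
  assumes P: "prob_space M"
    and m1: "\<And>N. X1 N \<in> borel_measurable M" and m2: "\<And>N. X2 N \<in> borel_measurable M"
    and b1: "bounded_in_prob M X1" and b2: "bounded_in_prob M X2" and \<epsilon>: "0 < \<epsilon>"
  shows "\<exists>T>0. eventually (\<lambda>N. 1 - \<epsilon> \<le> measure M {\<omega>\<in>space M. \<bar>X1 N \<omega>\<bar> \<le> T \<and> \<bar>X2 N \<omega>\<bar> \<le> T}) sequentially"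
proof -
  interpret prob_space M by (fact P)
  obtain C1 where C1: "eventually (\<lambda>N. prob {\<omega>\<in>space M. \<bar>X1 N \<omega>\<bar> > C1} < \<epsilon> / 2) sequentially"
    using b1 \<epsilon> unfolding bounded_in_prob_def by (meson half_gt_zero)
  obtain C2 where C2: "eventually (\<lambda>N. prob {\<omega>\<in>space M. \<bar>X2 N \<omega>\<bar> > C2} < \<epsilon> / 2) sequentially"
    using b2 \<epsilon> unfolding bounded_in_prob_def by (meson half_gt_zero)
  define T where "T = max 1 (max C1 C2)"
  have "eventually (\<lambda>N. 1 - \<epsilon> \<le> prob {\<omega>\<in>space M. \<bar>X1 N \<omega>\<bar> \<le> T \<and> \<bar>X2 N \<omega>\<bar> \<le> T}) sequentially"
    using C1 C2
  proof eventually_elim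
    case (elim N)
    let ?A1 = "{\<omega>\<in>space M. T < \<bar>X1 N \<omega>\<bar>}" and ?A2 = "{\<omega>\<in>space M. T < \<bar>X2 N \<omega>\<bar>}"
    have sets: "?A1 \<in> events" "?A2 \<in> events"
      "{\<omega>\<in>space M. \<bar>X1 N \<omega>\<bar> > C1} \<in> events" "{\<omega>\<in>space M. \<bar>X2 N \<omega>\<bar> > C2} \<in> events"
      using m1[of N] m2[of N] by measurable
    have "prob ?A1 \<le> prob {\<omega>\<in>space M. \<bar>X1 N \<omega>\<bar> > C1}" "prob ?A2 \<le> prob {\<omega>\<in>space M. \<bar>X2 N \<omega>\<bar> > C2}"
      using sets unfolding T_def by (auto intro!: finite_measure_mono)
    then have "prob (?A1 \<union> ?A2) < \<epsilon>" using measure_Un_le[OF sets(1,2)] elim by linarith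
    moreover have "{\<omega>\<in>space M. \<bar>X1 N \<omega>\<bar> \<le> T \<and> \<bar>X2 N \<omega>\<bar> \<le> T} = space M - (?A1 \<union> ?A2)" by auto
    ultimately show ?case using prob_compl[of "?A1 \<union> ?A2"] sets by auto
  qed
  moreover have "0 < T" unfolding T_def by simp
  ultimately show ?thesis by blast
qed

lemma measure_tendsto_1_if_eventually_contains:
  fixes X1 X2 :: "nat \<Rightarrow> 'a \<Rightarrow> real"
  assumes P: "prob_space M"
    and m1: "\<And>N. X1 N \<in> borel_measurable M" and m2: "\<And>N. X2 N \<in> borel_measurable M"
    and b1: "bounded_in_prob M X1" and b2: "bounded_in_prob M X2" and S: "\<And>N. S N \<in> sets M"
    and contains: "\<And>T. 0 < T \<Longrightarrow>
      eventually (\<lambda>N. \<forall>\<omega>\<in>space M. X1 N \<omega> \<le> T \<and> X2 N \<omega> \<le> T \<longrightarrow> Q N \<omega>) sequentially"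
    and Q: "\<And>N \<omega>. \<omega> \<in> space M \<Longrightarrow> Q N \<omega> \<Longrightarrow> \<omega> \<in> S N"
  shows "(\<lambda>N. measure M (S N)) \<longlonglongrightarrow> 1"
proof (rule tendstoI)
  interpret prob_space M by (fact P)
  fix r :: real assume r: "0 < r"
  obtain T where T: "0 < T"
    and large: "eventually (\<lambda>N. 1 - r / 2 \<le> prob {\<omega>\<in>space M. \<bar>X1 N \<omega>\<bar> \<le> T \<and> \<bar>X2 N \<omega>\<bar> \<le> T}) sequentially"
    using bounded_in_prob_joint[OF P m1 m2 b1 b2, of "r / 2"] r by auto
  show "eventually (\<lambda>N. dist (prob (S N)) 1 < r) sequentially"
    using large contains[OF T]
  proof eventually_elim
    case (elim N)
    have "{\<omega>\<in>space M. \<bar>X1 N \<omega>\<bar> \<le> T \<and> \<bar>X2 N \<omega>\<bar> \<le> T} \<subseteq> S N"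
      using elim(2) by (blast dest: abs_le_D1 intro: Q)
    then have "prob {\<omega>\<in>space M. \<bar>X1 N \<omega>\<bar> \<le> T \<and> \<bar>X2 N \<omega>\<bar> \<le> T} \<le> prob (S N)"
      using S by (intro finite_measure_mono)
    then have "1 - r / 2 \<le> prob (S N)" using elim(1) by linarith
    moreover have "prob (S N) \<le> 1" by (rule prob_le_1)
    ultimately show ?case using r unfolding dist_real_def by linarith
  qed
qed

lemma borel_measurable_scaled_error:
  fixes f :: "'a \<Rightarrow> nat \<Rightarrow> real"
  assumes "\<And>k. (\<lambda>\<omega>. f \<omega> k) \<in> borel_measurable M"
  shows "(\<lambda>\<omega>. sqrt (real N) * sqrt (\<Sum>k<K. (f \<omega> k - c k)\<^sup>2)) \<in> borel_measurable M"
  using assms by measurable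

lemma borel_measurable_scaled_error2:
  fixes f :: "'a \<Rightarrow> nat \<Rightarrow> nat \<Rightarrow> real"
  assumes "\<And>j k. (\<lambda>\<omega>. f \<omega> j k) \<in> borel_measurable M"
  shows "(\<lambda>\<omega>. sqrt (real N) * sqrt (\<Sum>j<J. \<Sum>k<K. (f \<omega> j k - c j k)\<^sup>2)) \<in> borel_measurable M"
  using assms by measurable

theorem theorem1:
  fixes M :: "'a measure" and J K :: nat and \<rho> :: real
    and \<xi> :: "nat \<Rightarrow> 'a \<Rightarrow> nat" and Y :: "nat \<Rightarrow> nat \<Rightarrow> 'a \<Rightarrow> bool"
    and \<nu>s :: "nat \<Rightarrow> real" and Bs :: "nat \<Rightarrow> nat \<Rightarrow> real"
    and \<nu>h :: "nat \<Rightarrow> 'a \<Rightarrow> nat \<Rightarrow> real" and Bh :: "nat \<Rightarrow> 'a \<Rightarrow> nat \<Rightarrow> nat \<Rightarrow> real"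
  assumes P: "prob_space M"
    and K: "1 \<le> K"
    and nu_sum: "(\<Sum>k<K. \<nu>s k) = 1"
    and A2_nu: "\<forall>k<K. 0 < \<nu>s k"
    and A2_beta: "\<forall>j<J. \<forall>k<K. 0 < Bs j k \<and> Bs j k < 1"
    and indep: "prob_space.indep_vars M (\<lambda>_. count_space UNIV)
                  (\<lambda>i \<omega>. (\<xi> i \<omega>, restrict (\<lambda>j. Y i j \<omega>) {..<J})) UNIV"
    and model: "\<forall>i k y. k < K \<longrightarrow>
                  measure M {\<omega>\<in>space M. \<xi> i \<omega> = k \<and> (\<forall>j<J. Y i j \<omega> = y j)}
                  = \<nu>s k * (\<Prod>j<J. cprob (Bs j k) (y j))"
    and mle: "\<forall>N. \<forall>\<omega>\<in>space M. is_MLE N J K (\<nu>h N \<omega>) (Bh N \<omega>) (\<lambda>i j. Y i j \<omega>)"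
    and meas_nu: "\<forall>N k. (\<lambda>\<omega>. \<nu>h N \<omega> k) \<in> borel_measurable M"
    and meas_B: "\<forall>N j k. (\<lambda>\<omega>. Bh N \<omega> j k) \<in> borel_measurable M"
    and A1_nu: "bounded_in_prob M (\<lambda>N \<omega>. sqrt (real N) * sqrt (\<Sum>k<K. (\<nu>h N \<omega> k - \<nu>s k)\<^sup>2))"
    and A1_B: "bounded_in_prob M
                 (\<lambda>N \<omega>. sqrt (real N) * sqrt (\<Sum>j<J. \<Sum>k<K. (Bh N \<omega> j k - Bs j k)\<^sup>2))"
    and A3: "1 \<le> \<rho>"
  shows "\<forall>j<J.
     (\<lambda>N. measure M {\<omega>\<in>space M.
          m_tilde N J K \<rho> (\<nu>h N \<omega>) (Bh N \<omega>) (\<lambda>i j'. Y i j' \<omega>) j = card (Bs j ` {..<K})})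
       \<longlonglongrightarrow> 1
   \<and> (\<forall>g<K. \<forall>h<K. Bs j g = Bs j h \<longrightarrow>
        (\<lambda>N. measure M {\<omega>\<in>space M.
            beta_tilde N J K \<rho> (\<nu>h N \<omega>) (Bh N \<omega>) (\<lambda>i j'. Y i j' \<omega>) j g
          = beta_tilde N J K \<rho> (\<nu>h N \<omega>) (Bh N \<omega>) (\<lambda>i j'. Y i j' \<omega>) j h}) \<longlonglongrightarrow> 1)
   \<and> (\<forall>g<K. \<forall>h<K. Bs j g \<noteq> Bs j h \<longrightarrow>
        (\<lambda>N. measure M {\<omega>\<in>space M.
            beta_tilde N J K \<rho> (\<nu>h N \<omega>) (Bh N \<omega>) (\<lambda>i j'. Y i j' \<omega>) j g
          \<noteq> beta_tilde N J K \<rho> (\<nu>h N \<omega>) (Bh N \<omega>) (\<lambda>i j'. Y i j' \<omega>) j h}) \<longlonglongrightarrow> 1)"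
proof -
  have measurable_params: "refinement_measurability M J j (\<nu>h N) (Bh N) Y" if "j < J" for N j
    using meas_nu meas_B measurable_response_of_indep_vars[OF P indep] that by unfold_locales simp_all
  have measurable_errors:
    "(\<lambda>\<omega>. sqrt (real N) * sqrt (\<Sum>k<K. (\<nu>h N \<omega> k - \<nu>s k)\<^sup>2)) \<in> borel_measurable M"
    "(\<lambda>\<omega>. sqrt (real N) * sqrt (\<Sum>j<J. \<Sum>k<K. (Bh N \<omega> j k - Bs j k)\<^sup>2)) \<in> borel_measurable M" for N
    using meas_nu meas_B by (simp_all add: borel_measurable_scaled_error borel_measurable_scaled_error2)
  have tendsto_1: "(\<lambda>N. measure M (S N)) \<longlonglongrightarrow> 1"
    if j: "j < J" and S: "\<And>N. S N \<in> sets M"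
      and correct: "\<And>N \<omega>. \<omega> \<in> space M \<Longrightarrow>
        refinement_correct N J K \<rho> (\<nu>h N \<omega>) (Bh N \<omega>) (\<lambda>i j'. Y i j' \<omega>) (Bs j) j \<Longrightarrow> \<omega> \<in> S N"
    for j S
    by (rule measure_tendsto_1_if_eventually_contains[OF P measurable_errors A1_nu A1_B S
          eventually_refinement_correct[OF K nu_sum A2_nu A2_beta j A3] correct])
      (use mle in auto)
  show ?thesis
    by (intro allI impI conjI tendsto_1 refinement_measurability.sets_m_tilde_eq
        refinement_measurability.sets_beta_tilde_eq refinement_measurability.sets_beta_tilde_neq
        measurable_params) (unfold refinement_correct_def mem_Collect_eq, blast+)
qed

end
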